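(* Let $\mathbb X$ be a basic space and $\mathcal D=(D,<,\rho)$ a computable partially ordered set. 1. Every partial function $F:\mathbb X\to D$ in $\mathrm{Max}_{\mathrm{PR}}[\mathbb X\to\mathcal D]\cap\mathrm{Min}_{\mathrm{PR}}[\mathbb X\to\mathcal D]$ is the restriction of a partial computable function $\mathbb X\to D$ to some $\Sigma^0_1\wedge\Pi^0_1$ subset of $\mathbb X$. In particular, every total function in $\mathrm{Max}_{\mathrm{PR}}[\mathbb X\to\mathcal D]\cap\mathrm{Min}_{\mathrm{PR}}[\mathbb X\to\mathcal D]$ is computable. 2. If $D$ has no maximal (resp. no minimal) element, then the restriction of any partial computable function $\mathbb X\to D$ to any $\Sigma^0_1\wedge\Pi^0_1$ subset of $\mathbb X$ is in $\mathrm{Max}_{\mathrm{PR}}[\mathbb X\to\mathcal D]$ (resp. $\mathrm{Min}_{\mathrm{PR}}[\mathbb X\to\mathcal D]$). 3. If $D$ has neither maximal nor minimal elements, then $\mathrm{Max}_{\mathrm{PR}}[\mathbb X\to\mathcal D]\cap\mathrm{Min}_{\mathrm{PR}}[\mathbb X\to\mathcal D]$ is exactly the family of restrictions of partial computable functions $\mathbb X\to D$ to $\Sigma^0_1\wedge\Pi^0_1$ subsets of $\mathbb X$.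
   Context: A basic space is a finite non-empty product of sets each of which is $\mathbb N$, $\mathbb Z$, or $A^*$ for some finite alphabet $A$. A computable partially ordered set is a triple $\mathcal D=(D,<,\rho)$ where $\rho:\mathbb N\to D$ is a bijection and $<$ is a strict partial order on $D$ with $\{(m,n):\rho(m)<\rho(n)\}$ computable; a partial function into $D$ is partial computable if its composition with $\rho^{-1}$ is. For a partial $f:\mathbb X\times\mathbb N\to D$ monotone increasing (resp. decreasing) in its second argument on its domain, $\max^{\mathcal D}f$ (resp. $\min^{\mathcal D}f$) is the partial function defined exactly at those $x$ for which $\{f(x,t):t\in\mathbb N,\ f(x,t)\text{ defined}\}$ is finite and non-empty, with value its maximum (resp. minimum) element. $\mathrm{Max}_{\mathrm{PR}}[\mathbb X\to\mathcal D]$ (resp. $\mathrm{Min}_{\mathrm{PR}}[\mathbb X\to\mathcal D]$) is the class of all $\max^{\mathcal D}f$ with $f$ partial computable and increasing in its second argument (resp. all $\min^{\mathcal D}f$ with $f$ partial computable and decreasing in its second argument). A set $Z\subseteq\mathbb X$ is $\Sigma^0_1\wedge\Pi^0_1$ if $Z=\{x:\exists t\,R(x,t)\wedge\forall t\,S(x,t)\}$ for computable $R,S\subseteq\mathbb X\times\mathbb N$. The restriction of a partial function $G$ to $Z$ is the partial function with domain $\mathrm{dom}(G)\cap Z$ agreeing with $G$ there. *)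

theory Defs
  imports Main "HOL-Library.Nat_Bijection"
begin

datatype recf = Zero | Succ | Proj nat | Comp recf "recf list" | Prec recf recf | Mn recf

inductive evalr :: "recf \<Rightarrow> nat list \<Rightarrow> nat \<Rightarrow> bool" where
  zero: "evalr Zero xs 0"
| succ: "evalr Succ (x # xs) (Suc x)"
| proj: "i < length xs \<Longrightarrow> evalr (Proj i) xs (xs ! i)"
| comp: "length ys = length gs \<Longrightarrow> (\<forall>i<length gs. evalr (gs ! i) xs (ys ! i))
          \<Longrightarrow> evalr f ys z \<Longrightarrow> evalr (Comp f gs) xs z"
| prec0: "evalr f xs y \<Longrightarrow> evalr (Prec f g) (0 # xs) y"
| precS: "evalr (Prec f g) (n # xs) y \<Longrightarrow> evalr g (n # y # xs) z
          \<Longrightarrow> evalr (Prec f g) (Suc n # xs) z"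
| mn: "evalr f (n # xs) 0 \<Longrightarrow> (\<forall>m<n. \<exists>y. evalr f (m # xs) (Suc y))
          \<Longrightarrow> evalr (Mn f) xs n"

text \<open>Components: N, Z, or A* for the finite alphabet A = {0..<k}.\<close>
datatype bcomp = CN | CZ | CW nat
datatype bval = VN nat | VZ int | VW "nat list"

fun bval_in :: "bcomp \<Rightarrow> bval \<Rightarrow> bool" where
  "bval_in CN (VN _) = True"
| "bval_in CZ (VZ _) = True"
| "bval_in (CW k) (VW w) = (\<forall>a\<in>set w. a < k)"
| "bval_in _ _ = False"

definition basic_space :: "bcomp list \<Rightarrow> bool" where
  "basic_space X \<longleftrightarrow> X \<noteq> []"

definition space :: "bcomp list \<Rightarrow> bval list set" where
  "space X = {v. list_all2 bval_in X v}"

fun enc_val :: "bval \<Rightarrow> nat" where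
  "enc_val (VN n) = n"
| "enc_val (VZ i) = int_encode i"
| "enc_val (VW w) = list_encode w"

definition code :: "bval list \<Rightarrow> nat" where
  "code v = list_encode (map enc_val v)"

definition pcomp_on :: "bcomp list \<Rightarrow> (nat \<Rightarrow> 'd) \<Rightarrow> (bval list \<Rightarrow> 'd option) \<Rightarrow> bool" where
  "pcomp_on X \<rho> F \<longleftrightarrow> (\<exists>r. \<forall>x\<in>space X. \<forall>y. evalr r [code x] y \<longleftrightarrow> F x = Some (\<rho> y))"

definition pcomp2_on :: "bcomp list \<Rightarrow> (nat \<Rightarrow> 'd) \<Rightarrow> (bval list \<Rightarrow> nat \<Rightarrow> 'd option) \<Rightarrow> bool" where
  "pcomp2_on X \<rho> f \<longleftrightarrow>
     (\<exists>r. \<forall>x\<in>space X. \<forall>t y. evalr r [code x, t] y \<longleftrightarrow> f x t = Some (\<rho> y))"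

definition comprel2_on :: "bcomp list \<Rightarrow> (bval list \<Rightarrow> nat \<Rightarrow> bool) \<Rightarrow> bool" where
  "comprel2_on X R \<longleftrightarrow>
     (\<exists>r. \<forall>x\<in>space X. \<forall>t. evalr r [code x, t] (if R x t then 1 else 0))"

definition sigma1_pi1 :: "bcomp list \<Rightarrow> bval list set \<Rightarrow> bool" where
  "sigma1_pi1 X Z \<longleftrightarrow> Z \<subseteq> space X \<and>
     (\<exists>R S. comprel2_on X R \<and> comprel2_on X S \<and>
        (\<forall>x\<in>space X. x \<in> Z \<longleftrightarrow> (\<exists>t. R x t) \<and> (\<forall>t. S x t)))"

text \<open>Computable partially ordered set (D,<,rho) with D the whole type 'd.\<close>
definition comp_poset :: "('d \<Rightarrow> 'd \<Rightarrow> bool) \<Rightarrow> (nat \<Rightarrow> 'd) \<Rightarrow> bool" where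
  "comp_poset lt \<rho> \<longleftrightarrow> bij \<rho> \<and> (\<forall>d. \<not> lt d d) \<and>
     (\<forall>a b c. lt a b \<longrightarrow> lt b c \<longrightarrow> lt a c) \<and>
     (\<exists>r. \<forall>m n. evalr r [m, n] (if lt (\<rho> m) (\<rho> n) then 1 else 0))"

definition incr_on :: "bcomp list \<Rightarrow> ('d \<Rightarrow> 'd \<Rightarrow> bool) \<Rightarrow> (bval list \<Rightarrow> nat \<Rightarrow> 'd option) \<Rightarrow> bool" where
  "incr_on X lt f \<longleftrightarrow> (\<forall>x\<in>space X. \<forall>t t' d d'. t \<le> t' \<longrightarrow> f x t = Some d \<longrightarrow>
      f x t' = Some d' \<longrightarrow> d = d' \<or> lt d d')"

definition decr_on :: "bcomp list \<Rightarrow> ('d \<Rightarrow> 'd \<Rightarrow> bool) \<Rightarrow> (bval list \<Rightarrow> nat \<Rightarrow> 'd option) \<Rightarrow> bool" where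
  "decr_on X lt f \<longleftrightarrow> (\<forall>x\<in>space X. \<forall>t t' d d'. t \<le> t' \<longrightarrow> f x t = Some d \<longrightarrow>
      f x t' = Some d' \<longrightarrow> d = d' \<or> lt d' d)"

definition maxD :: "('d \<Rightarrow> 'd \<Rightarrow> bool) \<Rightarrow> (bval list \<Rightarrow> nat \<Rightarrow> 'd option) \<Rightarrow> bval list \<Rightarrow> 'd option" where
  "maxD lt f x = (let S = {d. \<exists>t. f x t = Some d} in
     if finite S \<and> S \<noteq> {} then Some (THE m. m \<in> S \<and> (\<forall>d\<in>S. d = m \<or> lt d m)) else None)"

definition minD :: "('d \<Rightarrow> 'd \<Rightarrow> bool) \<Rightarrow> (bval list \<Rightarrow> nat \<Rightarrow> 'd option) \<Rightarrow> bval list \<Rightarrow> 'd option" where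
  "minD lt f x = (let S = {d. \<exists>t. f x t = Some d} in
     if finite S \<and> S \<noteq> {} then Some (THE m. m \<in> S \<and> (\<forall>d\<in>S. d = m \<or> lt m d)) else None)"

definition MaxPR :: "bcomp list \<Rightarrow> ('d \<Rightarrow> 'd \<Rightarrow> bool) \<Rightarrow> (nat \<Rightarrow> 'd) \<Rightarrow> (bval list \<Rightarrow> 'd option) set" where
  "MaxPR X lt \<rho> = {F. \<exists>f. pcomp2_on X \<rho> f \<and> incr_on X lt f \<and>
      (\<forall>x\<in>space X. F x = maxD lt f x)}"

definition MinPR :: "bcomp list \<Rightarrow> ('d \<Rightarrow> 'd \<Rightarrow> bool) \<Rightarrow> (nat \<Rightarrow> 'd) \<Rightarrow> (bval list \<Rightarrow> 'd option) set" where
  "MinPR X lt \<rho> = {F. \<exists>f. pcomp2_on X \<rho> f \<and> decr_on X lt f \<and>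
      (\<forall>x\<in>space X. F x = minD lt f x)}"

definition RestrPC :: "bcomp list \<Rightarrow> (nat \<Rightarrow> 'd) \<Rightarrow> (bval list \<Rightarrow> 'd option) set" where
  "RestrPC X \<rho> = {F. \<exists>G Z. pcomp_on X \<rho> G \<and> sigma1_pi1 X Z \<and>
      (\<forall>x\<in>space X. F x = (if x \<in> Z then G x else None))}"

end

theory Submission
  imports Defs
begin

text \<open>
  Let \<open>F = max f = min g\<close> with \<open>f\<close> ascending and \<open>g\<close> descending in the stage argument. Then
  \<open>F x\<close> is defined iff \<open>f x\<close> and \<open>g x\<close> take a common value and every value of \<open>f x\<close> lies
  below every value of \<open>g x\<close>, and that common value is \<open>F x\<close>. Running both computations with a
  bound \<open>N\<close> on all unbounded searches, and letting \<open>N\<close> grow, turns the first condition into a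
  \<open>\<Sigma>\<^sup>0\<^sub>1\<close> and the second into a \<open>\<Pi>\<^sup>0\<^sub>1\<close> condition, because bounded evaluation is itself a
  recursive function of \<open>N\<close>; the first common value found is computable.

  Conversely, for \<open>G\<close> partial computable and \<open>Z = {x. (\<exists>t. R x t) \<and> (\<forall>t. S x t)}\<close>, let
  \<open>f x t\<close> be \<open>G x\<close> once \<open>R\<close> has been witnessed while \<open>S\<close> still holds up to \<open>t\<close>, and let it
  climb strictly upward from \<open>G x\<close> as soon as \<open>S\<close> fails. Its maximum is the restriction of \<open>G\<close>
  to \<open>Z\<close>; the climb is computable because, without maximal elements, a strict successor is found
  by searching the computable order. Minima are maxima for the converse order.
\<close>

inductive_cases evalr_ZeroE: "evalr Zero xs y"
inductive_cases evalr_SuccE: "evalr Succ xs y"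
inductive_cases evalr_ProjE: "evalr (Proj i) xs y"
inductive_cases evalr_CompE: "evalr (Comp f gs) xs y"
inductive_cases evalr_Prec0E: "evalr (Prec f g) (0 # xs) y"
inductive_cases evalr_PrecSE: "evalr (Prec f g) (Suc n # xs) y"
inductive_cases evalr_MnE: "evalr (Mn f) xs y"

lemma evalr_deterministic: "evalr r xs y \<Longrightarrow> evalr r xs y' \<Longrightarrow> y = y'"
proof (induction arbitrary: y' rule: evalr.induct)
  case (comp ys gs xs f z)
  from comp.prems obtain ys' where len: "length ys' = length gs"
    and gs: "\<forall>i<length gs. evalr (gs ! i) xs (ys' ! i)" and f: "evalr f ys' y'"
    by (auto elim: evalr_CompE)
  have "ys = ys'"
  proof (rule nth_equalityI)
    show "length ys = length ys'" using comp.hyps(1) len by simp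
    show "ys ! i = ys' ! i" if "i < length ys" for i
      using that comp.hyps(1) comp.IH(1) gs by auto
  qed
  with comp.IH(2) f show ?case by blast
next
  case (prec0 f xs y g)
  then show ?case by (blast elim: evalr_Prec0E)
next
  case (precS f g n xs y z)
  then show ?case by (blast elim: evalr_PrecSE)
next
  case (mn f n xs)
  from mn.prems have y': "evalr f (y' # xs) 0" and below: "\<forall>m<y'. \<exists>y. evalr f (m # xs) (Suc y)"
    by (auto elim: evalr_MnE)
  show ?case
  proof (rule linorder_cases)
    assume "n < y'"
    with below mn.IH(1) show ?thesis by fastforce
  next
    assume "y' < n"
    with mn.IH(2) y' show ?thesis by fastforce
  qed
qed (auto elim: evalr_ZeroE evalr_SuccE evalr_ProjE)

lemma evalr_CompI:
  "evalr f ys z \<Longrightarrow> list_all2 (\<lambda>g y. evalr g xs y) gs ys \<Longrightarrow> evalr (Comp f gs) xs z"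
  by (rule evalr.comp) (auto simp: list_all2_conv_all_nth)

lemma evalr_Comp_inv:
  "evalr (Comp f gs) xs z \<Longrightarrow> \<exists>ys. list_all2 (\<lambda>g y. evalr g xs y) gs ys \<and> evalr f ys z"
  by (erule evalr_CompE) (auto simp: list_all2_conv_all_nth, metis)

lemma evalr_ProjI: "i < length xs \<Longrightarrow> xs ! i = y \<Longrightarrow> evalr (Proj i) xs y"
  using evalr.proj by blast

lemma evalr_swap_args:
  "evalr r [c, t] v \<Longrightarrow> evalr (Comp r [Proj 1, Proj 0]) [t, c] v"
  by (rule evalr_CompI) (auto intro: evalr_ProjI)

definition recf_projs :: "nat \<Rightarrow> nat \<Rightarrow> recf list" where
  "recf_projs m k = map (\<lambda>i. Proj (m + i)) [0..<k]"

lemma evalr_recf_projs: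
  "drop m xs = ys \<Longrightarrow> length ys = k \<Longrightarrow> list_all2 (\<lambda>g y. evalr g xs y) (recf_projs m k) ys"
  by (auto simp: recf_projs_def list_all2_conv_all_nth intro!: evalr_ProjI)

lemma evalr_Prec_iterate:
  "evalr f ys (s 0) \<Longrightarrow> (\<And>j. j < n \<Longrightarrow> evalr g (j # s j # ys) (s (Suc j)))
   \<Longrightarrow> evalr (Prec f g) (n # ys) (s n)"
  by (induction n) (auto intro: evalr.prec0 evalr.precS)

fun recf_const :: "nat \<Rightarrow> recf" where
  "recf_const 0 = Zero"
| "recf_const (Suc c) = Comp Succ [recf_const c]"

lemma evalr_Comp_Succ: "evalr g xs a \<Longrightarrow> evalr (Comp Succ [g]) xs (Suc a)"
  by (auto intro!: evalr_CompI evalr.succ)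

lemma evalr_recf_const: "evalr (recf_const c) xs c"
  by (induction c) (auto intro: evalr.zero evalr_Comp_Succ)

definition recf_ifz :: "recf \<Rightarrow> recf \<Rightarrow> recf \<Rightarrow> recf" where
  "recf_ifz a b c = Comp (Prec (Proj 0) (Proj 3)) [a, b, c]"

lemma evalr_recf_ifz:
  assumes "evalr a xs u" "evalr b xs v" "evalr c xs w"
  shows "evalr (recf_ifz a b c) xs (if u = 0 then v else w)"
proof -
  have "evalr (Prec (Proj 0) (Proj 3)) (u # [v, w]) ((\<lambda>n. if n = 0 then v else w) u)"
    by (rule evalr_Prec_iterate) (auto intro: evalr_ProjI)
  with assms show ?thesis
    unfolding recf_ifz_def by (auto intro!: evalr_CompI[where ys = "[u, v, w]"])
qed

definition recf_pred :: "recf \<Rightarrow> recf" where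
  "recf_pred a = Comp (Prec Zero (Proj 0)) [a]"

lemma evalr_recf_pred:
  assumes "evalr a xs u"
  shows "evalr (recf_pred a) xs (u - 1)"
proof -
  have "evalr (Prec Zero (Proj 0)) (u # []) ((\<lambda>n. n - 1) u)"
    by (rule evalr_Prec_iterate) (auto intro: evalr_ProjI evalr.zero)
  with assms show ?thesis
    unfolding recf_pred_def by (auto intro!: evalr_CompI[where ys = "[u]"])
qed

definition recf_monus :: "recf \<Rightarrow> recf \<Rightarrow> recf" where
  "recf_monus a b = Comp (Prec (Proj 0) (recf_pred (Proj 1))) [b, a]"

lemma evalr_recf_monus:
  assumes "evalr a xs u" "evalr b xs v"
  shows "evalr (recf_monus a b) xs (u - v)"
proof -
  have "evalr (Prec (Proj 0) (recf_pred (Proj 1))) (v # [u]) ((\<lambda>j. u - j) v)"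
  proof (rule evalr_Prec_iterate)
    fix j
    have "evalr (recf_pred (Proj 1)) [j, u - j, u] (u - j - 1)"
      by (intro evalr_recf_pred evalr_ProjI) auto
    then show "evalr (recf_pred (Proj 1)) [j, u - j, u] (u - Suc j)" by simp
  qed (auto intro: evalr_ProjI)
  with assms show ?thesis
    unfolding recf_monus_def by (auto intro!: evalr_CompI[where ys = "[v, u]"])
qed

definition recf_eq :: "recf \<Rightarrow> recf \<Rightarrow> recf" where
  "recf_eq a b = recf_ifz (recf_monus a b) (recf_ifz (recf_monus b a) (recf_const 1) Zero) Zero"

lemma evalr_recf_eq:
  assumes "evalr a xs u" "evalr b xs v"
  shows "evalr (recf_eq a b) xs (if u = v then 1 else 0)"
proof -
  have "evalr (recf_eq a b) xs (if u - v = 0 then if v - u = 0 then 1 else 0 else 0)"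
    unfolding recf_eq_def
    by (intro evalr_recf_ifz evalr_recf_monus evalr_recf_const evalr.zero assms)
  then show ?thesis by (simp split: if_splits)
qed

definition recf_not :: "recf \<Rightarrow> recf" where
  "recf_not a = recf_ifz a (recf_const 1) Zero"

lemma evalr_recf_not: "evalr a xs (if P then 1 else 0) \<Longrightarrow> evalr (recf_not a) xs (if \<not> P then 1 else 0)"
  unfolding recf_not_def
  by (drule evalr_recf_ifz[OF _ evalr_recf_const[of 1] evalr.zero]) (simp split: if_splits)

definition recf_bex :: "nat \<Rightarrow> recf \<Rightarrow> recf" where
  "recf_bex k P = Prec (Comp P (Zero # recf_projs 0 k))
     (recf_ifz (Proj 1) (Comp P (Comp Succ [Proj 0] # recf_projs 2 k)) (recf_const 1))"

lemma evalr_recf_bex: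
  assumes k: "length ys = k" and P: "\<And>t. evalr P (t # ys) (if Q t then 1 else 0)"
  shows "evalr (recf_bex k P) (j # ys) (if \<exists>t\<le>j. Q t then 1 else 0)"
proof -
  let ?s = "\<lambda>j. if \<exists>t\<le>j. Q t then 1 else 0 :: nat"
  define base where "base = Comp P (Zero # recf_projs 0 k)"
  define step where "step = recf_ifz (Proj 1) (Comp P (Comp Succ [Proj 0] # recf_projs 2 k)) (recf_const 1)"
  have "evalr base ys (if Q 0 then 1 else 0)"
    unfolding base_def by (rule evalr_CompI[OF P]) (auto intro: evalr.zero evalr_recf_projs simp: k)
  then have "evalr base ys (?s 0)" by simp
  moreover have "evalr step (i # ?s i # ys) (?s (Suc i))" for i
  proof -
    have "evalr (Comp P (Comp Succ [Proj 0] # recf_projs 2 k)) (i # ?s i # ys) (if Q (Suc i) then 1 else 0)"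
      by (rule evalr_CompI[OF P])
        (auto intro!: evalr_Comp_Succ evalr_ProjI evalr_recf_projs simp: k)
    then have "evalr step (i # ?s i # ys) (if ?s i = 0 then if Q (Suc i) then 1 else 0 else 1)"
      unfolding step_def by (intro evalr_recf_ifz evalr_recf_const) (auto intro: evalr_ProjI)
    moreover have "(if ?s i = 0 then if Q (Suc i) then 1 else 0 else 1) = ?s (Suc i)"
      by (auto simp: le_Suc_eq)
    ultimately show ?thesis by (simp only:)
  qed
  ultimately have "evalr (Prec base step) (j # ys) (?s j)"
    by (rule evalr_Prec_iterate)
  then show ?thesis by (simp add: recf_bex_def base_def step_def)
qed

definition recf_ball :: "nat \<Rightarrow> recf \<Rightarrow> recf" where
  "recf_ball k P = recf_not (recf_bex k (recf_not P))"

lemma evalr_recf_ball: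
  assumes "length ys = k" and "\<And>t. evalr P (t # ys) (if Q t then 1 else 0)"
  shows "evalr (recf_ball k P) (j # ys) (if \<forall>t\<le>j. Q t then 1 else 0)"
  using evalr_recf_not[OF evalr_recf_bex[OF assms(1) evalr_recf_not[OF assms(2)]]]
  unfolding recf_ball_def by simp

lemma evalr_Mn_iff:
  assumes P: "\<And>n. evalr P (n # xs) (p n)"
  shows "evalr (Mn P) xs y \<longleftrightarrow> p y = 0 \<and> (\<forall>m<y. p m \<noteq> 0)"
proof
  assume "evalr (Mn P) xs y"
  then have "evalr P (y # xs) 0" and "\<forall>m<y. \<exists>z. evalr P (m # xs) (Suc z)"
    by (auto elim: evalr_MnE)
  with P evalr_deterministic show "p y = 0 \<and> (\<forall>m<y. p m \<noteq> 0)" by fastforce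
next
  assume found: "p y = 0 \<and> (\<forall>m<y. p m \<noteq> 0)"
  show "evalr (Mn P) xs y"
  proof (rule evalr.mn)
    show "evalr P (y # xs) 0" using P[of y] found by simp
    show "\<forall>m<y. \<exists>z. evalr P (m # xs) (Suc z)" using P found by (metis not0_implies_Suc)
  qed
qed

definition recf_find :: "recf \<Rightarrow> recf" where
  "recf_find Q = Mn (recf_not Q)"

lemma evalr_recf_find_iff:
  assumes "\<And>n. evalr Q (n # xs) (if P n then 1 else 0)"
  shows "evalr (recf_find Q) xs y \<longleftrightarrow> (\<exists>n. P n) \<and> y = (LEAST n. P n)"
proof -
  have "evalr (recf_find Q) xs y \<longleftrightarrow> P y \<and> (\<forall>m<y. \<not> P m)"
    unfolding recf_find_def evalr_Mn_iff[OF evalr_recf_not[OF assms]] by auto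
  also have "\<dots> \<longleftrightarrow> (\<exists>n. P n) \<and> y = (LEAST n. P n)"
  proof
    assume least: "P y \<and> (\<forall>m<y. \<not> P m)"
    have "(LEAST n. P n) = y"
      by (rule Least_equality) (use least not_less in blast)+
    with least show "(\<exists>n. P n) \<and> y = (LEAST n. P n)" by auto
  qed (auto intro: LeastI_ex dest: not_less_Least)
  finally show ?thesis .
qed

section \<open>Evaluation with bounded searches\<close>

fun prec_iter ::
  "(nat list \<Rightarrow> nat option) \<Rightarrow> (nat list \<Rightarrow> nat option) \<Rightarrow> nat \<Rightarrow> nat list \<Rightarrow> nat option" where
  "prec_iter F G 0 ys = F ys"
| "prec_iter F G (Suc j) ys =
     (case prec_iter F G j ys of None \<Rightarrow> None | Some y \<Rightarrow> G (j # y # ys))"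

fun mu_bounded :: "(nat list \<Rightarrow> nat option) \<Rightarrow> nat list \<Rightarrow> nat \<Rightarrow> nat \<Rightarrow> nat option" where
  "mu_bounded F xs 0 m = None"
| "mu_bounded F xs (Suc c) m =
     (case F (m # xs) of None \<Rightarrow> None | Some 0 \<Rightarrow> Some m | Some (Suc _) \<Rightarrow> mu_bounded F xs c (Suc m))"

fun eval_bounded :: "nat \<Rightarrow> recf \<Rightarrow> nat list \<Rightarrow> nat option" where
  "eval_bounded N Zero xs = Some 0"
| "eval_bounded N Succ xs = (case xs of [] \<Rightarrow> None | x # _ \<Rightarrow> Some (Suc x))"
| "eval_bounded N (Proj i) xs = (if i < length xs then Some (xs ! i) else None)"
| "eval_bounded N (Comp f gs) xs =
     (if \<forall>g\<in>set gs. eval_bounded N g xs \<noteq> None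
      then eval_bounded N f (map (\<lambda>g. the (eval_bounded N g xs)) gs) else None)"
| "eval_bounded N (Prec f g) xs =
     (case xs of [] \<Rightarrow> None | m # ys \<Rightarrow> prec_iter (eval_bounded N f) (eval_bounded N g) m ys)"
| "eval_bounded N (Mn f) xs = mu_bounded (eval_bounded N f) xs N 0"

lemma prec_iter_sound:
  assumes "\<And>xs y. F xs = Some y \<Longrightarrow> evalr f xs y" and "\<And>xs y. G xs = Some y \<Longrightarrow> evalr g xs y"
  shows "prec_iter F G j ys = Some y \<Longrightarrow> evalr (Prec f g) (j # ys) y"
proof (induction j arbitrary: y)
  case (Suc j)
  then show ?case using assms by (auto intro: evalr.precS split: option.splits)
qed (use assms in \<open>auto intro: evalr.prec0\<close>)

lemma mu_bounded_sound:
  "mu_bounded F xs c m = Some y \<Longrightarrow> \<forall>m'<m. \<exists>z. F (m' # xs) = Some (Suc z) \<Longrightarrow>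
    F (y # xs) = Some 0 \<and> (\<forall>m'<y. \<exists>z. F (m' # xs) = Some (Suc z))"
proof (induction c arbitrary: m)
  case (Suc c)
  then show ?case
    by (auto split: option.splits nat.splits intro!: Suc.IH) (metis less_Suc_eq)
qed simp

lemma eval_bounded_sound: "eval_bounded N r xs = Some y \<Longrightarrow> evalr r xs y"
proof (induction r arbitrary: xs y)
  case (Comp f gs)
  let ?ys = "map (\<lambda>g. the (eval_bounded N g xs)) gs"
  from Comp.prems have defined: "\<forall>g\<in>set gs. eval_bounded N g xs \<noteq> None"
    and f: "eval_bounded N f ?ys = Some y" by (auto split: if_splits)
  have "list_all2 (\<lambda>g y. evalr g xs y) gs ?ys"
    using Comp.IH(2) defined by (auto simp: list_all2_conv_all_nth)
  with Comp.IH(1)[OF f] show ?case by (rule evalr_CompI)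
next
  case (Prec f g)
  then show ?case
    by (auto split: list.splits intro: prec_iter_sound[of "eval_bounded N f" f "eval_bounded N g" g])
next
  case (Mn f)
  from mu_bounded_sound[of "eval_bounded N f" xs N 0 y] Mn.prems
  have "eval_bounded N f (y # xs) = Some 0"
    and "\<forall>m<y. \<exists>z. eval_bounded N f (m # xs) = Some (Suc z)" by auto
  with Mn.IH show ?case by (blast intro: evalr.mn)
qed (auto intro: evalr.zero evalr.succ evalr.proj split: list.splits if_splits)

lemma mu_bounded_complete:
  "F (y # xs) = Some 0 \<Longrightarrow> \<forall>m'<y. \<exists>z. F (m' # xs) = Some (Suc z) \<Longrightarrow> m \<le> y \<Longrightarrow> y - m < c
   \<Longrightarrow> mu_bounded F xs c m = Some y"
proof (induction c arbitrary: m)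
  case (Suc c)
  show ?case
  proof (cases "m = y")
    case False
    then obtain z where "F (m # xs) = Some (Suc z)" using Suc.prems by force
    then show ?thesis using Suc.IH[of "Suc m"] Suc.prems False by simp
  qed (use Suc in simp)
qed simp

lemma eval_bounded_eventually: "evalr r xs y \<Longrightarrow> eventually (\<lambda>N. eval_bounded N r xs = Some y) at_top"
proof (induction rule: evalr.induct)
  case (comp ys gs xs f z)
  have "eventually (\<lambda>N. \<forall>i\<in>{..<length gs}. eval_bounded N (gs ! i) xs = Some (ys ! i)) at_top"
    using comp.IH(1) by (intro eventually_ball_finite) auto
  with comp.IH(2) show ?case
  proof eventually_elim
    case (elim N)
    then have "map (\<lambda>g. the (eval_bounded N g xs)) gs = ys"
      and "\<forall>g\<in>set gs. eval_bounded N g xs \<noteq> None"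
      using comp.hyps(1) by (auto intro!: nth_equalityI simp: in_set_conv_nth)
    with elim show ?case by simp
  qed
next
  case (precS f g n xs y z)
  from precS.IH show ?case by eventually_elim simp
next
  case (mn f n xs)
  have "eventually (\<lambda>N. \<forall>m\<in>{..<n}. \<exists>z. eval_bounded N f (m # xs) = Some (Suc z)) at_top"
    using mn.IH(2) by (intro eventually_ball_finite) (auto elim!: eventually_mono)
  with mn.IH(1) eventually_gt_at_top[of n] show ?case
    by eventually_elim (auto intro: mu_bounded_complete)
qed auto

section \<open>Bounded evaluation is recursive\<close>

fun enc_option :: "nat option \<Rightarrow> nat" where
  "enc_option None = 0"
| "enc_option (Some y) = Suc y"

fun recf_guard :: "recf list \<Rightarrow> recf \<Rightarrow> recf" where
  "recf_guard [] e = e"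
| "recf_guard (h # hs) e = recf_ifz h Zero (recf_guard hs e)"

lemma evalr_recf_guard:
  "list_all2 (\<lambda>h v. evalr h zs v) hs vs \<Longrightarrow> evalr e zs w \<Longrightarrow>
   evalr (recf_guard hs e) zs (if \<forall>v\<in>set vs. v \<noteq> 0 then w else 0)"
proof (induction hs arbitrary: vs)
  case (Cons h hs)
  then obtain v vs' where vs: "vs = v # vs'" and h: "evalr h zs v"
    and "list_all2 (\<lambda>h v. evalr h zs v) hs vs'"
    by (cases vs) auto
  with Cons have "evalr (recf_guard hs e) zs (if \<forall>v\<in>set vs'. v \<noteq> 0 then w else 0)" by blast
  from evalr_recf_ifz[OF h evalr.zero this]
  have "evalr (recf_guard (h # hs) e) zs (if v = 0 then 0 else if \<forall>v\<in>set vs'. v \<noteq> 0 then w else 0)"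
    by simp
  moreover have "(if v = 0 then 0 else if \<forall>v\<in>set vs'. v \<noteq> 0 then w else 0)
      = (if \<forall>v\<in>set vs. v \<noteq> 0 then w else 0)" using vs by auto
  ultimately show ?case by (simp only:)
qed simp

text \<open>The state of the search of \<open>Mn\<close> after inspecting the candidates below \<open>j\<close>:
  \<open>0\<close> while searching, \<open>1\<close> once the function was undefined at a candidate, and \<open>m + 2\<close>
  once the zero \<open>m\<close> was found.\<close>

fun mu_state :: "(nat list \<Rightarrow> nat option) \<Rightarrow> nat list \<Rightarrow> nat \<Rightarrow> nat" where
  "mu_state F xs 0 = 0"
| "mu_state F xs (Suc j) =
     (if mu_state F xs j = 0
      then (case F (j # xs) of None \<Rightarrow> 1 | Some 0 \<Rightarrow> Suc (Suc j) | Some (Suc _) \<Rightarrow> 0)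
      else mu_state F xs j)"

lemma mu_state_stable: "mu_state F xs j \<noteq> 0 \<Longrightarrow> mu_state F xs (j + d) = mu_state F xs j"
  by (induction d) auto

lemma mu_bounded_eq_mu_state:
  "mu_state F xs m = 0 \<Longrightarrow>
   mu_bounded F xs c m = (if 2 \<le> mu_state F xs (m + c) then Some (mu_state F xs (m + c) - 2) else None)"
proof (induction c arbitrary: m)
  case (Suc c)
  show ?case
  proof (cases "F (m # xs)")
    case None
    with Suc.prems mu_state_stable[of F xs "Suc m" c] show ?thesis by simp
  next
    case (Some a)
    with Suc mu_state_stable[of F xs "Suc m" c] show ?thesis by (cases a) auto
  qed
qed simp

lemma enc_option_mu_bounded: "enc_option (mu_bounded F xs N 0) = mu_state F xs N - 1"
  using mu_bounded_eq_mu_state[of F xs 0 N] by (auto simp: numeral_2_eq_2)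

definition recf_mu_step :: "recf \<Rightarrow> recf" where
  "recf_mu_step c = recf_ifz (Proj 1)
     (recf_ifz c (recf_const 1) (recf_ifz (recf_pred c) (Comp Succ [Comp Succ [Proj 0]]) Zero)) (Proj 1)"

lemma evalr_recf_mu_step:
  assumes c: "\<And>s. evalr c (j # s # ys) (enc_option (F (j # xs)))"
  shows "evalr (recf_mu_step c) (j # mu_state F xs j # ys) (mu_state F xs (Suc j))"
proof -
  have "evalr (recf_mu_step c) (j # mu_state F xs j # ys)
     (if mu_state F xs j = 0
      then if enc_option (F (j # xs)) = 0 then 1
        else if enc_option (F (j # xs)) - 1 = 0 then Suc (Suc j) else 0
      else mu_state F xs j)"
    unfolding recf_mu_step_def
    by (intro evalr_recf_ifz c evalr_recf_const evalr_recf_pred evalr_Comp_Succ evalr.zero)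
      (auto intro: evalr_ProjI)
  moreover have "(if mu_state F xs j = 0
      then if enc_option (F (j # xs)) = 0 then 1
        else if enc_option (F (j # xs)) - 1 = 0 then Suc (Suc j) else 0
      else mu_state F xs j) = mu_state F xs (Suc j)"
    by (auto split: option.splits nat.splits)
  ultimately show ?thesis by (simp only:)
qed

text \<open>\<open>recf_eval_bounded k r\<close> maps \<open>N # xs\<close>, with \<open>length xs = k\<close>, to
  \<open>enc_option (eval_bounded N r xs)\<close>; it evaluates the parts of \<open>r\<close> on encoded values, and
  replaces the search of \<open>Mn\<close> by \<open>N\<close> steps of \<open>mu_state\<close>.\<close>

fun recf_eval_bounded :: "nat \<Rightarrow> recf \<Rightarrow> recf" where
  "recf_eval_bounded k Zero = recf_const 1"
| "recf_eval_bounded k Succ = (if k = 0 then Zero else Comp Succ [Comp Succ [Proj 1]])"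
| "recf_eval_bounded k (Proj i) = (if i < k then Comp Succ [Proj (Suc i)] else Zero)"
| "recf_eval_bounded k (Comp f gs) =
     recf_guard (map (recf_eval_bounded k) gs)
       (Comp (recf_eval_bounded (length gs) f) (Proj 0 # map (\<lambda>g. recf_pred (recf_eval_bounded k g)) gs))"
| "recf_eval_bounded k (Prec f g) =
     (if k = 0 then Zero else
      Comp (Prec (recf_eval_bounded (k - 1) f)
              (recf_ifz (Proj 1) Zero
                (Comp (recf_eval_bounded (Suc k) g)
                  (Proj 2 # Proj 0 # recf_pred (Proj 1) # recf_projs 3 (k - 1)))))
        (Proj 1 # Proj 0 # recf_projs 2 (k - 1)))"
| "recf_eval_bounded k (Mn f) =
     recf_pred (Comp
       (Prec Zero (recf_mu_step (Comp (recf_eval_bounded (Suc k) f) (Proj 2 # Proj 0 # recf_projs 3 k))))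
       (Proj 0 # Proj 0 # recf_projs 1 k))"

definition recf_eval_bounded_correct :: "recf \<Rightarrow> bool" where
  "recf_eval_bounded_correct r \<longleftrightarrow>
     (\<forall>N xs. evalr (recf_eval_bounded (length xs) r) (N # xs) (enc_option (eval_bounded N r xs)))"

lemma recf_eval_bounded_correct_Comp:
  assumes f: "recf_eval_bounded_correct f" and gs: "\<forall>g\<in>set gs. recf_eval_bounded_correct g"
  shows "recf_eval_bounded_correct (Comp f gs)"
  unfolding recf_eval_bounded_correct_def
proof (intro allI)
  fix N xs
  let ?vs = "map (\<lambda>g. enc_option (eval_bounded N g xs)) gs"
  let ?ys = "map (\<lambda>g. enc_option (eval_bounded N g xs) - 1) gs"
  have guards: "list_all2 (\<lambda>h v. evalr h (N # xs) v) (map (recf_eval_bounded (length xs)) gs) ?vs"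
    using gs by (auto simp: list_all2_conv_all_nth recf_eval_bounded_correct_def)
  have "evalr (recf_pred (recf_eval_bounded (length xs) g)) (N # xs) (enc_option (eval_bounded N g xs) - 1)"
    if "g \<in> set gs" for g
    using gs that by (intro evalr_recf_pred) (simp add: recf_eval_bounded_correct_def)
  then have "list_all2 (\<lambda>h v. evalr h (N # xs) v)
      (map (\<lambda>g. recf_pred (recf_eval_bounded (length xs) g)) gs) ?ys"
    unfolding list_all2_map1 list_all2_map2 list_all2_same by blast
  moreover have "evalr (recf_eval_bounded (length gs) f) (N # ?ys) (enc_option (eval_bounded N f ?ys))"
    using f unfolding recf_eval_bounded_correct_def by (metis length_map)
  ultimately have "evalr (Comp (recf_eval_bounded (length gs) f)
      (Proj 0 # map (\<lambda>g. recf_pred (recf_eval_bounded (length xs) g)) gs)) (N # xs)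
      (enc_option (eval_bounded N f ?ys))"
    by (auto intro!: evalr_CompI[where ys = "N # ?ys"] evalr_ProjI)
  from evalr_recf_guard[OF guards this]
  have "evalr (recf_eval_bounded (length xs) (Comp f gs)) (N # xs)
      (if \<forall>v\<in>set ?vs. v \<noteq> 0 then enc_option (eval_bounded N f ?ys) else 0)" by simp
  moreover have "(if \<forall>v\<in>set ?vs. v \<noteq> 0 then enc_option (eval_bounded N f ?ys) else 0)
      = enc_option (eval_bounded N (Comp f gs) xs)"
  proof (cases "\<forall>g\<in>set gs. eval_bounded N g xs \<noteq> None")
    case True
    then have ys: "?ys = map (\<lambda>g. the (eval_bounded N g xs)) gs" by (auto intro!: map_cong)
    show ?thesis unfolding ys using True by auto
  qed auto
  ultimately show "evalr (recf_eval_bounded (length xs) (Comp f gs)) (N # xs)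
      (enc_option (eval_bounded N (Comp f gs) xs))" by (simp only:)
qed

lemma recf_eval_bounded_correct_Prec:
  assumes f: "recf_eval_bounded_correct f" and g: "recf_eval_bounded_correct g"
  shows "recf_eval_bounded_correct (Prec f g)"
  unfolding recf_eval_bounded_correct_def
proof (intro allI)
  fix N xs
  show "evalr (recf_eval_bounded (length xs) (Prec f g)) (N # xs) (enc_option (eval_bounded N (Prec f g) xs))"
  proof (cases xs)
    case (Cons m ys)
    let ?k = "length xs"
    let ?s = "\<lambda>j. enc_option (prec_iter (eval_bounded N f) (eval_bounded N g) j ys)"
    let ?g = "Comp (recf_eval_bounded (Suc ?k) g) (Proj 2 # Proj 0 # recf_pred (Proj 1) # recf_projs 3 (?k - 1))"
    have "evalr (recf_ifz (Proj 1) Zero ?g) (j # ?s j # N # ys) (?s (Suc j))" for j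
    proof -
      have "evalr (recf_eval_bounded (Suc ?k) g) (N # j # (?s j - 1) # ys)
          (enc_option (eval_bounded N g (j # (?s j - 1) # ys)))"
        using g Cons unfolding recf_eval_bounded_correct_def by (metis length_Cons)
      moreover have "evalr (recf_pred (Proj 1)) (j # ?s j # N # ys) (?s j - 1)"
        by (intro evalr_recf_pred evalr_ProjI) auto
      ultimately have "evalr ?g (j # ?s j # N # ys) (enc_option (eval_bounded N g (j # (?s j - 1) # ys)))"
        using Cons by (auto intro!: evalr_CompI[where ys = "N # j # (?s j - 1) # ys"]
            evalr_ProjI evalr_recf_projs)
      then have "evalr (recf_ifz (Proj 1) Zero ?g) (j # ?s j # N # ys)
          (if ?s j = 0 then 0 else enc_option (eval_bounded N g (j # (?s j - 1) # ys)))"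
        by (intro evalr_recf_ifz evalr.zero) (auto intro: evalr_ProjI)
      moreover have "(if ?s j = 0 then 0 else enc_option (eval_bounded N g (j # (?s j - 1) # ys)))
          = ?s (Suc j)"
        by (auto split: option.splits)
      ultimately show ?thesis by (simp only:)
    qed
    moreover have "evalr (recf_eval_bounded (?k - 1) f) (N # ys) (?s 0)"
      using f Cons unfolding recf_eval_bounded_correct_def by (metis diff_Suc_1 length_Cons prec_iter.simps(1))
    ultimately have "evalr (Prec (recf_eval_bounded (?k - 1) f) (recf_ifz (Proj 1) Zero ?g)) (m # N # ys) (?s m)"
      by (intro evalr_Prec_iterate)
    with Cons show ?thesis
      by (auto intro!: evalr_CompI[where ys = "m # N # ys"] evalr_ProjI evalr_recf_projs)
  qed (auto intro: evalr.zero)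
qed

lemma recf_eval_bounded_correct_Mn:
  assumes f: "recf_eval_bounded_correct f"
  shows "recf_eval_bounded_correct (Mn f)"
  unfolding recf_eval_bounded_correct_def
proof (intro allI)
  fix N and xs :: "nat list"
  let ?k = "length xs"
  let ?F = "eval_bounded N f"
  let ?C = "Comp (recf_eval_bounded (Suc ?k) f) (Proj 2 # Proj 0 # recf_projs 3 ?k)"
  have "evalr ?C (j # s # N # xs) (enc_option (?F (j # xs)))" for j s
  proof (rule evalr_CompI[where ys = "N # j # xs"])
    show "evalr (recf_eval_bounded (Suc ?k) f) (N # j # xs) (enc_option (?F (j # xs)))"
      using f unfolding recf_eval_bounded_correct_def by (metis length_Cons)
  qed (auto intro!: evalr_ProjI evalr_recf_projs)
  then have "evalr (Prec Zero (recf_mu_step ?C)) (N # N # xs) (mu_state ?F xs N)"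
    by (intro evalr_Prec_iterate evalr_recf_mu_step) (auto intro: evalr.zero)
  then have "evalr (Comp (Prec Zero (recf_mu_step ?C)) (Proj 0 # Proj 0 # recf_projs 1 ?k)) (N # xs)
      (mu_state ?F xs N)"
    by (intro evalr_CompI[where ys = "N # N # xs"]) (auto intro!: evalr_ProjI evalr_recf_projs)
  then have "evalr (recf_eval_bounded ?k (Mn f)) (N # xs) (mu_state ?F xs N - 1)"
    unfolding recf_eval_bounded.simps by (rule evalr_recf_pred)
  then show "evalr (recf_eval_bounded ?k (Mn f)) (N # xs) (enc_option (eval_bounded N (Mn f) xs))"
    by (simp add: enc_option_mu_bounded)
qed

theorem evalr_recf_eval_bounded:
  "evalr (recf_eval_bounded (length xs) r) (N # xs) (enc_option (eval_bounded N r xs))"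
proof -
  have "recf_eval_bounded_correct r"
  proof (induction r)
    case (Comp f gs)
    then show ?case by (intro recf_eval_bounded_correct_Comp) auto
  next
    case (Prec f g)
    then show ?case by (rule recf_eval_bounded_correct_Prec)
  next
    case (Mn f)
    then show ?case by (rule recf_eval_bounded_correct_Mn)
  qed (auto simp: recf_eval_bounded_correct_def
      intro!: evalr_recf_const evalr_Comp_Succ evalr_ProjI evalr.zero split: list.splits)
  then show ?thesis unfolding recf_eval_bounded_correct_def by blast
qed

section \<open>Maxima of ascending partial sequences\<close>

definition ascending :: "('d \<Rightarrow> 'd \<Rightarrow> bool) \<Rightarrow> (nat \<Rightarrow> 'd option) \<Rightarrow> bool" where
  "ascending lt s \<longleftrightarrow> (\<forall>t t' d d'. t \<le> t' \<longrightarrow> s t = Some d \<longrightarrow> s t' = Some d' \<longrightarrow> d = d' \<or> lt d d')"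

lemma incr_on_iff_ascending: "incr_on X lt f \<longleftrightarrow> (\<forall>x\<in>space X. ascending lt (f x))"
  unfolding incr_on_def ascending_def by blast

lemma comp_posetE:
  assumes "comp_poset lt \<rho>"
  obtains rl where "bij \<rho>" "irreflp lt" "transp lt"
    "\<And>m n. evalr rl [m, n] (if lt (\<rho> m) (\<rho> n) then 1 else 0)"
  using assms unfolding comp_poset_def irreflp_def transp_def by blast

lemma the_greatest_eq:
  assumes "irreflp lt" "transp lt" and "m \<in> S" "\<forall>d\<in>S. d = m \<or> lt d m"
  shows "(THE m. m \<in> S \<and> (\<forall>d\<in>S. d = m \<or> lt d m)) = m"
proof (rule the_equality)
  fix m' assume "m' \<in> S \<and> (\<forall>d\<in>S. d = m' \<or> lt d m')"
  then have "m' = m \<or> lt m' m" "m = m' \<or> lt m m'" using assms(3,4) by blast+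
  with assms(1,2) show "m' = m" by (auto dest: transpD irreflpD)
qed (use assms in blast)

lemma finite_chain_has_greatest:
  assumes "finite S" "S \<noteq> {}" "\<forall>a\<in>S. \<forall>b\<in>S. a = b \<or> lt a b \<or> lt b a" "transp lt"
  shows "\<exists>m\<in>S. \<forall>d\<in>S. d = m \<or> lt d m"
  using assms
proof (induction S rule: finite_ne_induct)
  case (insert x S)
  then obtain m where m: "m \<in> S" "\<forall>d\<in>S. d = m \<or> lt d m" by auto
  with insert.prems consider "x = m \<or> lt x m" | "lt m x" by auto
  then show ?case
  proof cases
    case 2
    have "d = x \<or> lt d x" if "d \<in> insert x S" for d
    proof -
      from that m have "d = x \<or> d = m \<or> lt d m" by auto
      with 2 \<open>transp lt\<close> show ?thesis by (auto dest: transpD)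
    qed
    then show ?thesis by blast
  qed (use m in auto)
qed simp

lemma maxD_eqI:
  assumes "irreflp lt" "transp lt" "ascending lt (f x)"
    and attained: "f x t0 = Some d" and bound: "\<forall>t d'. f x t = Some d' \<longrightarrow> d' = d \<or> lt d' d"
  shows "maxD lt f x = Some d"
proof -
  let ?S = "{d. \<exists>t. f x t = Some d}"
  have "?S \<subseteq> insert d ((\<lambda>t. the (f x t)) ` {..<t0})"
  proof
    fix d' assume "d' \<in> ?S"
    then obtain t where t: "f x t = Some d'" by auto
    show "d' \<in> insert d ((\<lambda>t. the (f x t)) ` {..<t0})"
    proof (cases "t < t0")
      case False
      with assms(3) attained t have "d = d' \<or> lt d d'" unfolding ascending_def not_less by blast
      with bound t assms(1,2) have "d' = d" unfolding irreflp_def transp_def by blast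
      then show ?thesis by simp
    qed (use t in force)
  qed
  then have "finite ?S" by (rule finite_subset) auto
  moreover have "d \<in> ?S" using attained by auto
  moreover have "(THE m. m \<in> ?S \<and> (\<forall>d'\<in>?S. d' = m \<or> lt d' m)) = d"
    using attained bound by (intro the_greatest_eq[OF assms(1,2)]) auto
  ultimately show ?thesis unfolding maxD_def Let_def by auto
qed

lemma maxD_SomeD:
  assumes "irreflp lt" "transp lt" "ascending lt (f x)" and "maxD lt f x = Some m"
  shows "(\<exists>t. f x t = Some m) \<and> (\<forall>t d. f x t = Some d \<longrightarrow> d = m \<or> lt d m)"
proof -
  let ?S = "{d. \<exists>t. f x t = Some d}"
  have fin: "finite ?S" and ne: "?S \<noteq> {}"
    using assms(4) unfolding maxD_def Let_def by (auto split: if_splits)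
  moreover have "\<forall>a\<in>?S. \<forall>b\<in>?S. a = b \<or> lt a b \<or> lt b a"
  proof (intro ballI)
    fix a b assume "a \<in> ?S" "b \<in> ?S"
    then obtain t t' where "f x t = Some a" "f x t' = Some b" by auto
    moreover have "t \<le> t' \<or> t' \<le> t" by linarith
    ultimately show "a = b \<or> lt a b \<or> lt b a"
      using assms(3) unfolding ascending_def by blast
  qed
  ultimately obtain m0 where m0: "m0 \<in> ?S" "\<forall>d\<in>?S. d = m0 \<or> lt d m0"
    using finite_chain_has_greatest[OF _ _ _ assms(2)] by blast
  have "(THE m. m \<in> ?S \<and> (\<forall>d\<in>?S. d = m \<or> lt d m)) = m0"
    by (rule the_greatest_eq[OF assms(1,2) m0])
  with assms(4) fin ne have "m = m0" unfolding maxD_def Let_def by simp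
  with m0 show ?thesis by auto
qed

lemma maxD_eq_NoneI:
  "infinite {d. \<exists>t. f x t = Some d} \<or> (\<forall>t. f x t = None) \<Longrightarrow> maxD lt f x = None"
  unfolding maxD_def Let_def by auto

lemma minD_eq_maxD_conversep: "minD lt f x = maxD lt\<inverse>\<inverse> f x"
  unfolding minD_def maxD_def conversep_iff ..

lemma maxD_eq_minD_Some_iff:
  assumes "irreflp lt" "transp lt" "ascending lt (f x)" "ascending lt\<inverse>\<inverse> (g x)"
    and "maxD lt f x = minD lt g x"
  shows "maxD lt f x = Some d \<longleftrightarrow> (\<exists>t t'. f x t = Some d \<and> g x t' = Some d) \<and>
    (\<forall>t t' d d'. f x t = Some d \<longrightarrow> g x t' = Some d' \<longrightarrow> d = d' \<or> lt d d')"
proof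
  assume max: "maxD lt f x = Some d"
  from maxD_SomeD[OF assms(1-3) max] have f: "\<exists>t. f x t = Some d"
    and f_below: "\<forall>t d'. f x t = Some d' \<longrightarrow> d' = d \<or> lt d' d" by auto
  from maxD_SomeD[of "lt\<inverse>\<inverse>" g x d] assms max have g: "\<exists>t. g x t = Some d"
    and g_above: "\<forall>t d'. g x t = Some d' \<longrightarrow> d' = d \<or> lt d d'"
    by (auto simp: minD_eq_maxD_conversep)
  from f_below g_above \<open>transp lt\<close>
  have "\<forall>t t' d d'. f x t = Some d \<longrightarrow> g x t' = Some d' \<longrightarrow> d = d' \<or> lt d d'"
    by (metis transpD)
  with f g show "(\<exists>t t'. f x t = Some d \<and> g x t' = Some d) \<and>
    (\<forall>t t' d d'. f x t = Some d \<longrightarrow> g x t' = Some d' \<longrightarrow> d = d' \<or> lt d d')" by blast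
next
  assume "(\<exists>t t'. f x t = Some d \<and> g x t' = Some d) \<and>
    (\<forall>t t' d d'. f x t = Some d \<longrightarrow> g x t' = Some d' \<longrightarrow> d = d' \<or> lt d d')"
  then show "maxD lt f x = Some d" by (blast intro: maxD_eqI[where f = f, OF assms(1-3)])
qed

lemma MinPR_eq_MaxPR_conversep: "MinPR X lt \<rho> = MaxPR X lt\<inverse>\<inverse> \<rho>"
  unfolding MinPR_def MaxPR_def decr_on_def incr_on_def minD_eq_maxD_conversep by simp

lemma comp_poset_conversep: "comp_poset lt \<rho> \<Longrightarrow> comp_poset lt\<inverse>\<inverse> \<rho>"
  unfolding comp_poset_def conversep_iff by (blast intro: evalr_swap_args)

section \<open>Searching for a common value of an ascending and a descending sequence\<close>

definition represents :: "recf \<Rightarrow> (nat \<Rightarrow> 'd) \<Rightarrow> nat \<Rightarrow> (nat \<Rightarrow> 'd option) \<Rightarrow> bool" where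
  "represents r \<rho> c s \<longleftrightarrow> (\<forall>t y. evalr r [c, t] y \<longleftrightarrow> s t = Some (\<rho> y))"

lemma pcomp2_on_iff_represents: "pcomp2_on X \<rho> f \<longleftrightarrow> (\<exists>r. \<forall>x\<in>space X. represents r \<rho> (code x) (f x))"
  unfolding pcomp2_on_def represents_def ..

definition stage_value :: "recf \<Rightarrow> nat \<Rightarrow> nat \<Rightarrow> nat \<Rightarrow> nat" where
  "stage_value r N c t = enc_option (eval_bounded N r [c, t])"

lemma stage_value_SucD: "represents r \<rho> c s \<Longrightarrow> stage_value r N c t = Suc a \<Longrightarrow> s t = Some (\<rho> a)"
  unfolding represents_def stage_value_def
  by (cases "eval_bounded N r [c, t]") (auto dest: eval_bounded_sound)

lemma stage_value_eventually:
  assumes "bij \<rho>" "represents r \<rho> c s" "s t = Some d"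
  shows "\<exists>a N0. d = \<rho> a \<and> (\<forall>N\<ge>N0. stage_value r N c t = Suc a)"
proof -
  obtain a where a: "d = \<rho> a" using bij_pointE[OF assms(1)] by metis
  with assms(2,3) have "evalr r [c, t] a" unfolding represents_def by blast
  then obtain N0 where "\<forall>N\<ge>N0. eval_bounded N r [c, t] = Some a"
    using eval_bounded_eventually unfolding eventually_at_top_linorder by blast
  then have "\<forall>N\<ge>N0. stage_value r N c t = Suc a" unfolding stage_value_def by simp
  with a show ?thesis by blast
qed

definition match_at :: "recf \<Rightarrow> recf \<Rightarrow> nat \<Rightarrow> nat \<Rightarrow> nat \<Rightarrow> nat \<Rightarrow> bool" where
  "match_at r r' N c t s \<longleftrightarrow> stage_value r N c t \<noteq> 0 \<and> stage_value r N c t = stage_value r' N c s"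

definition below_at :: "(nat \<Rightarrow> nat \<Rightarrow> bool) \<Rightarrow> recf \<Rightarrow> recf \<Rightarrow> nat \<Rightarrow> nat \<Rightarrow> nat \<Rightarrow> nat \<Rightarrow> bool" where
  "below_at L r r' N c t s \<longleftrightarrow> stage_value r N c t \<noteq> 0 \<longrightarrow> stage_value r' N c s \<noteq> 0 \<longrightarrow>
     stage_value r N c t = stage_value r' N c s \<or> L (stage_value r N c t - 1) (stage_value r' N c s - 1)"

definition meets :: "recf \<Rightarrow> recf \<Rightarrow> nat \<Rightarrow> nat \<Rightarrow> bool" where
  "meets r r' c N \<longleftrightarrow> (\<exists>t\<le>N. \<exists>s\<le>N. match_at r r' N c t s)"

definition stays_below :: "(nat \<Rightarrow> nat \<Rightarrow> bool) \<Rightarrow> recf \<Rightarrow> recf \<Rightarrow> nat \<Rightarrow> nat \<Rightarrow> bool" where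
  "stays_below L r r' c N \<longleftrightarrow> (\<forall>t\<le>N. \<forall>s\<le>N. below_at L r r' N c t s)"

lemma ex_meets_iff:
  assumes "bij \<rho>" and r: "represents r \<rho> c s" and r': "represents r' \<rho> c s'"
  shows "(\<exists>N. meets r r' c N) \<longleftrightarrow> (\<exists>t t' d. s t = Some d \<and> s' t' = Some d)"
proof
  assume "\<exists>N. meets r r' c N"
  then obtain N t t' a where "stage_value r N c t = Suc a" "stage_value r' N c t' = Suc a"
    unfolding meets_def match_at_def by (metis not0_implies_Suc)
  with r r' show "\<exists>t t' d. s t = Some d \<and> s' t' = Some d" by (blast dest: stage_value_SucD)
next
  assume "\<exists>t t' d. s t = Some d \<and> s' t' = Some d"
  then obtain t t' d where "s t = Some d" "s' t' = Some d" by blast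
  then obtain a N0 b N0' where a: "d = \<rho> a" "\<forall>N\<ge>N0. stage_value r N c t = Suc a"
    and b: "d = \<rho> b" "\<forall>N\<ge>N0'. stage_value r' N c t' = Suc b"
    using stage_value_eventually[OF assms(1) r] stage_value_eventually[OF assms(1) r'] by metis
  from a(1) b(1) \<open>bij \<rho>\<close> have "a = b" by (metis bij_pointE)
  define N where "N = max (max N0 N0') (max t t')"
  with a b \<open>a = b\<close> have "t \<le> N \<and> t' \<le> N \<and> match_at r r' N c t t'"
    unfolding match_at_def by auto
  then have "meets r r' c N" unfolding meets_def by blast
  then show "\<exists>N. meets r r' c N" ..
qed

lemma all_stays_below_iff:
  assumes "bij \<rho>" and r: "represents r \<rho> c s" and r': "represents r' \<rho> c s'"
  shows "(\<forall>N. stays_below (\<lambda>m n. lt (\<rho> m) (\<rho> n)) r r' c N) \<longleftrightarrow>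
    (\<forall>t t' d d'. s t = Some d \<longrightarrow> s' t' = Some d' \<longrightarrow> d = d' \<or> lt d d')"
proof
  assume below: "\<forall>N. stays_below (\<lambda>m n. lt (\<rho> m) (\<rho> n)) r r' c N"
  show "\<forall>t t' d d'. s t = Some d \<longrightarrow> s' t' = Some d' \<longrightarrow> d = d' \<or> lt d d'"
  proof (intro allI impI)
    fix t t' d d' assume "s t = Some d" "s' t' = Some d'"
    then obtain a N0 b N0' where a: "d = \<rho> a" "\<forall>N\<ge>N0. stage_value r N c t = Suc a"
      and b: "d' = \<rho> b" "\<forall>N\<ge>N0'. stage_value r' N c t' = Suc b"
      using stage_value_eventually[OF assms(1) r] stage_value_eventually[OF assms(1) r'] by metis
    define N where "N = max (max N0 N0') (max t t')"
    have "stage_value r N c t = Suc a" "stage_value r' N c t' = Suc b"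
      using a b by (simp_all add: N_def)
    moreover have "below_at (\<lambda>m n. lt (\<rho> m) (\<rho> n)) r r' N c t t'"
      using below unfolding stays_below_def by (simp add: N_def)
    ultimately show "d = d' \<or> lt d d'" unfolding below_at_def using a(1) b(1) by auto
  qed
next
  assume le: "\<forall>t t' d d'. s t = Some d \<longrightarrow> s' t' = Some d' \<longrightarrow> d = d' \<or> lt d d'"
  show "\<forall>N. stays_below (\<lambda>m n. lt (\<rho> m) (\<rho> n)) r r' c N"
    unfolding stays_below_def below_at_def
  proof (intro allI impI)
    fix N t t' assume "stage_value r N c t \<noteq> 0" "stage_value r' N c t' \<noteq> 0"
    then obtain a b where ab: "stage_value r N c t = Suc a" "stage_value r' N c t' = Suc b"
      by (metis not0_implies_Suc)
    with r r' le have "\<rho> a = \<rho> b \<or> lt (\<rho> a) (\<rho> b)" by (blast dest: stage_value_SucD)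
    with ab bij_is_inj[OF assms(1)]
    show "stage_value r N c t = stage_value r' N c t' \<or>
        lt (\<rho> (stage_value r N c t - 1)) (\<rho> (stage_value r' N c t' - 1))"
      by (auto simp: inj_eq)
  qed
qed

definition meeting_stage :: "recf \<Rightarrow> recf \<Rightarrow> nat \<Rightarrow> nat" where
  "meeting_stage r r' c = (LEAST N. meets r r' c N)"

definition meeting_time :: "recf \<Rightarrow> recf \<Rightarrow> nat \<Rightarrow> nat" where
  "meeting_time r r' c = (LEAST t. \<exists>s\<le>meeting_stage r r' c. match_at r r' (meeting_stage r r' c) c t s)"

definition meeting_value :: "recf \<Rightarrow> recf \<Rightarrow> nat \<Rightarrow> nat" where
  "meeting_value r r' c = stage_value r (meeting_stage r r' c) c (meeting_time r r' c) - 1"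

lemma meeting_time_match:
  assumes "\<exists>N. meets r r' c N"
  shows "\<exists>s. match_at r r' (meeting_stage r r' c) c (meeting_time r r' c) s"
proof -
  have "meets r r' c (meeting_stage r r' c)"
    unfolding meeting_stage_def using assms by (rule LeastI_ex)
  then have "\<exists>t. \<exists>s\<le>meeting_stage r r' c. match_at r r' (meeting_stage r r' c) c t s"
    unfolding meets_def by blast
  from LeastI_ex[OF this] show ?thesis unfolding meeting_time_def by blast
qed

lemma meeting_value_common:
  assumes "\<exists>N. meets r r' c N" "represents r \<rho> c s" "represents r' \<rho> c s'"
  shows "\<exists>t t'. s t = Some (\<rho> (meeting_value r r' c)) \<and> s' t' = Some (\<rho> (meeting_value r r' c))"
proof -
  obtain t' where "match_at r r' (meeting_stage r r' c) c (meeting_time r r' c) t'"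
    using meeting_time_match[OF assms(1)] by blast
  then obtain a where "stage_value r (meeting_stage r r' c) c (meeting_time r r' c) = Suc a"
    and "stage_value r' (meeting_stage r r' c) c t' = Suc a"
    unfolding match_at_def by (metis not0_implies_Suc)
  with assms(2,3) show ?thesis
    unfolding meeting_value_def by (auto dest: stage_value_SucD)
qed

lemma evalr_stage_value: "evalr (recf_eval_bounded 2 r) [N, c, t] (stage_value r N c t)"
  using evalr_recf_eval_bounded[of "[c, t]" r N] by (simp add: stage_value_def numeral_2_eq_2)

text \<open>The programs below take arguments \<open>[s, N, c, t]\<close>: a position \<open>s\<close> in the second sequence,
  the stage \<open>N\<close>, the input code \<open>c\<close> and a position \<open>t\<close> in the first sequence.\<close>

definition recf_stage :: "recf \<Rightarrow> nat \<Rightarrow> recf" where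
  "recf_stage r i = Comp (recf_eval_bounded 2 r) [Proj 1, Proj 2, Proj i]"

lemma evalr_recf_stage:
  "evalr (recf_stage r 3) [s, N, c, t] (stage_value r N c t)"
  "evalr (recf_stage r 0) [s, N, c, t] (stage_value r N c s)"
  unfolding recf_stage_def
  by (auto intro!: evalr_CompI[OF evalr_stage_value] evalr_ProjI)

definition recf_match_at :: "recf \<Rightarrow> recf \<Rightarrow> recf" where
  "recf_match_at r r' = recf_ifz (recf_stage r 3) Zero (recf_eq (recf_stage r 3) (recf_stage r' 0))"

lemma evalr_recf_match_at:
  "evalr (recf_match_at r r') [s, N, c, t] (if match_at r r' N c t s then 1 else 0)"
proof -
  have "evalr (recf_match_at r r') [s, N, c, t] (if stage_value r N c t = 0 then 0
      else if stage_value r N c t = stage_value r' N c s then 1 else 0)"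
    unfolding recf_match_at_def by (intro evalr_recf_ifz evalr_recf_eq evalr_recf_stage evalr.zero)
  then show ?thesis unfolding match_at_def by (simp split: if_splits)
qed

definition recf_below_at :: "recf \<Rightarrow> recf \<Rightarrow> recf \<Rightarrow> recf" where
  "recf_below_at rl r r' =
     recf_ifz (recf_stage r 3) (recf_const 1)
       (recf_ifz (recf_stage r' 0) (recf_const 1)
         (recf_ifz (recf_eq (recf_stage r 3) (recf_stage r' 0))
           (Comp rl [recf_pred (recf_stage r 3), recf_pred (recf_stage r' 0)]) (recf_const 1)))"

lemma evalr_recf_below_at:
  assumes rl: "\<And>m n. evalr rl [m, n] (if L m n then 1 else 0)"
  shows "evalr (recf_below_at rl r r') [s, N, c, t] (if below_at L r r' N c t s then 1 else 0)"
proof -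
  let ?u = "stage_value r N c t" and ?v = "stage_value r' N c s"
  have "evalr (recf_pred (recf_stage r 3)) [s, N, c, t] (?u - 1)"
    and "evalr (recf_pred (recf_stage r' 0)) [s, N, c, t] (?v - 1)"
    by (intro evalr_recf_pred evalr_recf_stage)+
  then have "evalr (Comp rl [recf_pred (recf_stage r 3), recf_pred (recf_stage r' 0)]) [s, N, c, t]
      (if L (?u - 1) (?v - 1) then 1 else 0)"
    by (intro evalr_CompI[OF rl]) simp
  then have "evalr (recf_below_at rl r r') [s, N, c, t] (if ?u = 0 then 1 else if ?v = 0 then 1
      else if (if ?u = ?v then 1 else 0) = (0::nat) then if L (?u - 1) (?v - 1) then 1 else 0 else 1)"
    unfolding recf_below_at_def
    by (intro evalr_recf_ifz evalr_recf_eq evalr_recf_stage evalr_recf_const)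
  then show ?thesis unfolding below_at_def by (simp split: if_splits)
qed

definition recf_bex_below :: "recf \<Rightarrow> recf" where
  "recf_bex_below Q = Comp (recf_bex 3 Q) [Proj 1, Proj 1, Proj 2, Proj 0]"

lemma evalr_recf_bex_below:
  assumes "\<And>s. evalr Q [s, N, c, t] (if P s then 1 else 0)"
  shows "evalr (recf_bex_below Q) [t, N, c] (if \<exists>s\<le>N. P s then 1 else 0)"
proof -
  have "evalr (recf_bex 3 Q) [N, N, c, t] (if \<exists>s\<le>N. P s then 1 else 0)"
    using assms by (intro evalr_recf_bex) auto
  then show ?thesis
    unfolding recf_bex_below_def by (rule evalr_CompI) (auto intro: evalr_ProjI)
qed

definition recf_bex_square :: "recf \<Rightarrow> recf" where
  "recf_bex_square Q = Comp (recf_bex 2 (recf_bex_below Q)) [Proj 1, Proj 1, Proj 0]"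

lemma evalr_recf_bex_square:
  assumes "\<And>s t. evalr Q [s, N, c, t] (if P t s then 1 else 0)"
  shows "evalr (recf_bex_square Q) [c, N] (if \<exists>t\<le>N. \<exists>s\<le>N. P t s then 1 else 0)"
proof -
  have "evalr (recf_bex 2 (recf_bex_below Q)) [N, N, c] (if \<exists>t\<le>N. \<exists>s\<le>N. P t s then 1 else 0)"
    using assms by (intro evalr_recf_bex evalr_recf_bex_below) auto
  then show ?thesis
    unfolding recf_bex_square_def by (rule evalr_CompI) (auto intro: evalr_ProjI)
qed

definition recf_meets :: "recf \<Rightarrow> recf \<Rightarrow> recf" where
  "recf_meets r r' = recf_bex_square (recf_match_at r r')"

lemma evalr_recf_meets: "evalr (recf_meets r r') [c, N] (if meets r r' c N then 1 else 0)"
  unfolding recf_meets_def meets_def by (intro evalr_recf_bex_square evalr_recf_match_at)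

definition recf_stays_below :: "recf \<Rightarrow> recf \<Rightarrow> recf \<Rightarrow> recf" where
  "recf_stays_below rl r r' = recf_not (recf_bex_square (recf_not (recf_below_at rl r r')))"

lemma evalr_recf_stays_below:
  assumes "\<And>m n. evalr rl [m, n] (if L m n then 1 else 0)"
  shows "evalr (recf_stays_below rl r r') [c, N] (if stays_below L r r' c N then 1 else 0)"
proof -
  have "evalr (recf_not (recf_below_at rl r r')) [s, N, c, t]
      (if \<not> below_at L r r' N c t s then 1 else 0)" for s t
    using evalr_recf_not[OF evalr_recf_below_at[OF assms]] .
  from evalr_recf_not[OF evalr_recf_bex_square[OF this]] show ?thesis
    unfolding recf_stays_below_def stays_below_def by simp
qed

definition recf_meeting_value :: "recf \<Rightarrow> recf \<Rightarrow> recf" where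
  "recf_meeting_value r r' =
     (let stage = recf_find (Comp (recf_meets r r') [Proj 1, Proj 0]);
          time = recf_find (recf_bex_below (recf_match_at r r'))
      in recf_pred (Comp (recf_eval_bounded 2 r) [stage, Proj 0, Comp time [stage, Proj 0]]))"

lemma evalr_meeting_stage_iff:
  "evalr (recf_find (Comp (recf_meets r r') [Proj 1, Proj 0])) [c] N \<longleftrightarrow>
   (\<exists>N. meets r r' c N) \<and> N = meeting_stage r r' c"
proof -
  have "evalr (Comp (recf_meets r r') [Proj 1, Proj 0]) [n, c] (if meets r r' c n then 1 else 0)" for n
    by (rule evalr_CompI[OF evalr_recf_meets]) (auto intro: evalr_ProjI)
  from evalr_recf_find_iff[OF this] show ?thesis unfolding meeting_stage_def .
qed

lemma evalr_meeting_time_iff: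
  "evalr (recf_find (recf_bex_below (recf_match_at r r'))) [N, c] t \<longleftrightarrow>
   (\<exists>t. \<exists>s\<le>N. match_at r r' N c t s) \<and> t = (LEAST t. \<exists>s\<le>N. match_at r r' N c t s)"
  by (rule evalr_recf_find_iff) (rule evalr_recf_bex_below[OF evalr_recf_match_at])

lemma evalr_recf_meeting_value:
  "evalr (recf_meeting_value r r') [c] y \<longleftrightarrow> (\<exists>N. meets r r' c N) \<and> y = meeting_value r r' c"
proof -
  define stage where "stage = recf_find (Comp (recf_meets r r') [Proj 1, Proj 0])"
  define time where "time = recf_find (recf_bex_below (recf_match_at r r'))"
  let ?E = "Comp (recf_eval_bounded 2 r) [stage, Proj 0, Comp time [stage, Proj 0]]"
  have program: "recf_meeting_value r r' = recf_pred ?E"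
    unfolding recf_meeting_value_def stage_def time_def Let_def ..
  have evaluates: "evalr (recf_meeting_value r r') [c] (meeting_value r r' c)" if "\<exists>N. meets r r' c N"
  proof -
    let ?N = "meeting_stage r r' c" and ?t = "meeting_time r r' c"
    have N: "evalr stage [c] ?N" unfolding stage_def evalr_meeting_stage_iff using that by blast
    have "meets r r' c ?N" unfolding meeting_stage_def using that by (rule LeastI_ex)
    then have "evalr time [?N, c] ?t"
      unfolding time_def evalr_meeting_time_iff meeting_time_def meets_def by blast
    with N have "evalr ?E [c] (stage_value r ?N c ?t)"
      by (auto intro!: evalr_CompI[OF evalr_stage_value] evalr_CompI[where ys = "[?N, c]"] evalr_ProjI)
    from evalr_recf_pred[OF this] show ?thesis unfolding program meeting_value_def .
  qed
  show ?thesis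
  proof
    assume y: "evalr (recf_meeting_value r r') [c] y"
    then obtain z where "evalr ?E [c] z"
      using evalr_Comp_inv[of "Prec Zero (Proj 0)" "[?E]"]
      unfolding program recf_pred_def by (auto simp: list_all2_Cons1)
    then obtain N where "evalr stage [c] N"
      by (blast dest: evalr_Comp_inv[of "recf_eval_bounded 2 r"] elim: list.rel_cases)
    then have "\<exists>N. meets r r' c N" unfolding stage_def evalr_meeting_stage_iff by blast
    with y evaluates evalr_deterministic show "(\<exists>N. meets r r' c N) \<and> y = meeting_value r r' c" by blast
  qed (use evaluates in blast)
qed

lemma maxD_eq_meeting_value:
  assumes "bij \<rho>" "irreflp lt" "transp lt"
    and "ascending lt (f x)" "ascending lt\<inverse>\<inverse> (g x)" "maxD lt f x = minD lt g x"
    and rf: "represents rf \<rho> c (f x)" and rg: "represents rg \<rho> c (g x)"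
  shows "maxD lt f x = (if (\<exists>N. meets rf rg c N) \<and> (\<forall>N. stays_below (\<lambda>m n. lt (\<rho> m) (\<rho> n)) rf rg c N)
    then Some (\<rho> (meeting_value rf rg c)) else None)"
proof -
  note common = maxD_eq_minD_Some_iff[OF assms(2-6)]
  note iffs = ex_meets_iff[OF assms(1) rf rg] all_stays_below_iff[OF assms(1) rf rg, of lt]
  show ?thesis
  proof (cases "(\<exists>N. meets rf rg c N) \<and> (\<forall>N. stays_below (\<lambda>m n. lt (\<rho> m) (\<rho> n)) rf rg c N)")
    case True
    then have "\<exists>t t'. f x t = Some (\<rho> (meeting_value rf rg c)) \<and> g x t' = Some (\<rho> (meeting_value rf rg c))"
      and "\<forall>t t' d d'. f x t = Some d \<longrightarrow> g x t' = Some d' \<longrightarrow> d = d' \<or> lt d d'"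
      using meeting_value_common[OF _ rf rg] iffs(2) by blast+
    then have "maxD lt f x = Some (\<rho> (meeting_value rf rg c))"
      unfolding common by blast
    with True show ?thesis by simp
  next
    case False
    have "maxD lt f x = None"
    proof (rule ccontr)
      assume "maxD lt f x \<noteq> None"
      then obtain d where "maxD lt f x = Some d" by blast
      then have "(\<exists>t t'. f x t = Some d \<and> g x t' = Some d) \<and>
          (\<forall>t t' d d'. f x t = Some d \<longrightarrow> g x t' = Some d' \<longrightarrow> d = d' \<or> lt d d')"
        unfolding common .
      with False show False unfolding iffs by blast
    qed
    with False show ?thesis by simp
  qed
qed

lemma pcomp_on_meeting_value:
  assumes "bij \<rho>"
  shows "pcomp_on X \<rho>
    (\<lambda>x. if \<exists>N. meets r r' (code x) N then Some (\<rho> (meeting_value r r' (code x))) else None)"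
  unfolding pcomp_on_def
proof (intro exI ballI allI)
  fix x y
  show "evalr (recf_meeting_value r r') [code x] y \<longleftrightarrow>
      (if \<exists>N. meets r r' (code x) N then Some (\<rho> (meeting_value r r' (code x))) else None) = Some (\<rho> y)"
    unfolding evalr_recf_meeting_value using bij_is_inj[OF assms] by (auto simp: inj_eq)
qed

lemma sigma1_pi1_meeting_set:
  assumes "\<And>m n. evalr rl [m, n] (if L m n then 1 else 0)"
  shows "sigma1_pi1 X {x \<in> space X. (\<exists>N. meets r r' (code x) N) \<and> (\<forall>N. stays_below L r r' (code x) N)}"
  unfolding sigma1_pi1_def comprel2_on_def
proof (intro conjI exI)
  show "\<forall>x\<in>space X. \<forall>N. evalr (recf_meets r r') [code x, N] (if meets r r' (code x) N then 1 else 0)"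
    by (blast intro: evalr_recf_meets)
  show "\<forall>x\<in>space X. \<forall>N. evalr (recf_stays_below rl r r') [code x, N]
      (if stays_below L r r' (code x) N then 1 else 0)"
    by (blast intro: evalr_recf_stays_below[OF assms])
qed auto

theorem MaxPR_Int_MinPR_subset_RestrPC:
  assumes "comp_poset lt \<rho>"
  shows "MaxPR X lt \<rho> \<inter> MinPR X lt \<rho> \<subseteq> RestrPC X \<rho>"
proof
  fix F assume "F \<in> MaxPR X lt \<rho> \<inter> MinPR X lt \<rho>"
  then obtain f g where f: "pcomp2_on X \<rho> f" "\<forall>x\<in>space X. ascending lt (f x)"
      "\<forall>x\<in>space X. F x = maxD lt f x"
    and g: "pcomp2_on X \<rho> g" "\<forall>x\<in>space X. ascending lt\<inverse>\<inverse> (g x)"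
      "\<forall>x\<in>space X. F x = minD lt g x"
    unfolding MaxPR_def MinPR_def incr_on_iff_ascending decr_on_def ascending_def by auto
  obtain rf rg where rf: "\<forall>x\<in>space X. represents rf \<rho> (code x) (f x)"
    and rg: "\<forall>x\<in>space X. represents rg \<rho> (code x) (g x)"
    using f(1) g(1) unfolding pcomp2_on_iff_represents by blast
  obtain rl where "bij \<rho>" and order: "irreflp lt" "transp lt"
    and rl: "\<And>m n. evalr rl [m, n] (if lt (\<rho> m) (\<rho> n) then 1 else 0)"
    using comp_posetE[OF assms] by blast
  define Z where "Z = {x \<in> space X. (\<exists>N. meets rf rg (code x) N) \<and>
    (\<forall>N. stays_below (\<lambda>m n. lt (\<rho> m) (\<rho> n)) rf rg (code x) N)}"
  define G where "G = (\<lambda>x. if \<exists>N. meets rf rg (code x) N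
    then Some (\<rho> (meeting_value rf rg (code x))) else None)"
  have "pcomp_on X \<rho> G" unfolding G_def by (rule pcomp_on_meeting_value[OF \<open>bij \<rho>\<close>])
  moreover have "sigma1_pi1 X Z" unfolding Z_def by (rule sigma1_pi1_meeting_set[OF rl])
  moreover have "F x = (if x \<in> Z then G x else None)" if "x \<in> space X" for x
    using maxD_eq_meeting_value[OF \<open>bij \<rho>\<close> order, of f x g rf "code x" rg] f g rf rg that
    unfolding Z_def G_def by auto
  ultimately show "F \<in> RestrPC X \<rho>" unfolding RestrPC_def by blast
qed

section \<open>Restrictions are maxima when there is no maximal element\<close>

definition climb :: "(nat \<Rightarrow> bool) \<Rightarrow> (nat \<Rightarrow> bool) \<Rightarrow> (nat \<Rightarrow> 'a) \<Rightarrow> nat \<Rightarrow> 'a option" where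
  "climb R S c t =
     (if \<forall>t'\<le>t. S t' then if \<exists>t'\<le>t. R t' then Some (c 0) else None else Some (c (Suc t)))"

lemma climb_comp: "climb R S (\<lambda>j. \<phi> (c j)) t = map_option \<phi> (climb R S c t)"
  unfolding climb_def by auto

lemma monotone_iterates:
  assumes "transp lt" "\<And>m. lt (\<rho> m) (\<rho> (h m))"
  shows "monotone (<) lt (\<lambda>j. \<rho> ((h ^^ j) y))"
proof (rule monotoneI)
  fix i j :: nat assume "i < j"
  then show "lt (\<rho> ((h ^^ i) y)) (\<rho> ((h ^^ j) y))"
    by (induction i j rule: less_Suc_induct) (use assms in \<open>auto dest: transpD\<close>)
qed

lemma ascending_climb:
  assumes "monotone (<) lt c"
  shows "ascending lt (climb R S c)"
  unfolding ascending_def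
proof (intro allI impI)
  fix t t' d d' assume "t \<le> t'" "climb R S c t = Some d" "climb R S c t' = Some d'"
  then consider "d = c 0" "d' = c 0" | "d = c 0" "d' = c (Suc t')" | "d = c (Suc t)" "d' = c (Suc t')"
    unfolding climb_def by (auto split: if_splits intro: le_trans)
  then show "d = d' \<or> lt d d'"
    using assms \<open>t \<le> t'\<close> unfolding monotone_def by cases (auto simp: le_less)
qed

lemma maxD_climb:
  assumes order: "irreflp lt" "transp lt" and mono: "monotone (<) lt c" and f: "f x = climb R S c"
  shows "maxD lt f x = (if (\<exists>t. R t) \<and> (\<forall>t. S t) then Some (c 0) else None)"
proof (cases "\<forall>t. S t")
  case True
  show ?thesis
  proof (cases "\<exists>t. R t")
    case R: True
    then obtain t0 where "R t0" by blast
    then have "f x t0 = Some (c 0)" using True f unfolding climb_def by auto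
    moreover have "\<forall>t d. f x t = Some d \<longrightarrow> d = c 0 \<or> lt d (c 0)"
      using True f unfolding climb_def by auto
    ultimately have "maxD lt f x = Some (c 0)"
      using maxD_eqI[where f = f and x = x, OF order ascending_climb[OF mono, of R S, folded f]] by blast
    with True R show ?thesis by simp
  next
    case False
    with True f have "\<forall>t. f x t = None" unfolding climb_def by auto
    with False show ?thesis by (simp add: maxD_eq_NoneI)
  qed
next
  case False
  then obtain t0 where "\<not> S t0" by blast
  then have "f x t = Some (c (Suc t))" if "t0 \<le> t" for t
    using that f unfolding climb_def by auto
  then have "(\<lambda>t. c (Suc t)) ` {t0..} \<subseteq> {d. \<exists>t. f x t = Some d}" by auto
  moreover have "inj (\<lambda>t. c (Suc t))"
    using mono \<open>irreflp lt\<close> unfolding monotone_def irreflp_def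
    by (metis (mono_tags, lifting) Suc_less_eq injI linorder_neqE_nat)
  ultimately have "infinite {d. \<exists>t. f x t = Some d}"
    by (meson finite_imageD finite_subset infinite_Ici inj_on_subset subset_UNIV)
  with False show ?thesis by (simp add: maxD_eq_NoneI)
qed

definition recf_iterate :: "recf \<Rightarrow> recf" where
  "recf_iterate h = Prec (Proj 0) (Comp h [Proj 1])"

lemma evalr_recf_iterate:
  assumes "\<And>m. evalr h [m] (up m)"
  shows "evalr (recf_iterate h) [k, y] ((up ^^ k) y)"
proof -
  have "evalr (Prec (Proj 0) (Comp h [Proj 1])) (k # [y]) ((\<lambda>k. (up ^^ k) y) k)"
    by (rule evalr_Prec_iterate) (auto intro!: evalr_CompI[OF assms] evalr_ProjI)
  then show ?thesis unfolding recf_iterate_def by simp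
qed

definition recf_bex_upto :: "recf \<Rightarrow> recf" where
  "recf_bex_upto r = Comp (recf_bex 1 (Comp r [Proj 1, Proj 0])) [Proj 1, Proj 0]"

definition recf_ball_upto :: "recf \<Rightarrow> recf" where
  "recf_ball_upto r = Comp (recf_ball 1 (Comp r [Proj 1, Proj 0])) [Proj 1, Proj 0]"

lemma evalr_recf_bex_upto:
  assumes "\<And>t. evalr r [c, t] (if R t then 1 else 0)"
  shows "evalr (recf_bex_upto r) [c, t] (if \<exists>t'\<le>t. R t' then 1 else 0)"
proof -
  have "evalr (recf_bex 1 (Comp r [Proj 1, Proj 0])) [t, c] (if \<exists>t'\<le>t. R t' then 1 else 0)"
    by (intro evalr_recf_bex[where ys = "[c]"] evalr_swap_args assms) simp
  then show ?thesis unfolding recf_bex_upto_def by (rule evalr_swap_args)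
qed

lemma evalr_recf_ball_upto:
  assumes "\<And>t. evalr r [c, t] (if S t then 1 else 0)"
  shows "evalr (recf_ball_upto r) [c, t] (if \<forall>t'\<le>t. S t' then 1 else 0)"
proof -
  have "evalr (recf_ball 1 (Comp r [Proj 1, Proj 0])) [t, c] (if \<forall>t'\<le>t. S t' then 1 else 0)"
    by (intro evalr_recf_ball[where ys = "[c]"] evalr_swap_args assms) simp
  then show ?thesis unfolding recf_ball_upto_def by (rule evalr_swap_args)
qed

definition recf_assert :: "nat \<Rightarrow> recf \<Rightarrow> recf" where
  "recf_assert k a = recf_find (Comp a (recf_projs 1 k))"

lemma evalr_recf_assert:
  assumes "length xs = k" "evalr a xs (if P then 1 else 0)"
  shows "evalr (recf_assert k a) xs y \<longleftrightarrow> P \<and> y = 0"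
proof -
  have "evalr (Comp a (recf_projs 1 k)) (n # xs) (if P then 1 else 0)" for n
    by (rule evalr_CompI[OF assms(2) evalr_recf_projs]) (simp_all add: assms(1))
  from evalr_recf_find_iff[OF this] show ?thesis
    unfolding recf_assert_def by (cases P) simp_all
qed

definition recf_climb_guard :: "recf \<Rightarrow> recf \<Rightarrow> recf" where
  "recf_climb_guard rR rS = recf_assert 2 (recf_ifz (recf_ball_upto rS) (recf_const 1) (recf_bex_upto rR))"

lemma evalr_recf_climb_guard:
  assumes "\<And>t. evalr rR [c, t] (if R t then 1 else 0)" and "\<And>t. evalr rS [c, t] (if S t then 1 else 0)"
  shows "evalr (recf_climb_guard rR rS) [c, t] w \<longleftrightarrow> ((\<forall>t'\<le>t. S t') \<longrightarrow> (\<exists>t'\<le>t. R t')) \<and> w = 0"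
proof -
  let ?all = "\<forall>t'\<le>t. S t'" and ?ex = "\<exists>t'\<le>t. R t'"
  have "evalr (recf_ifz (recf_ball_upto rS) (recf_const 1) (recf_bex_upto rR)) [c, t]
      (if (if ?all then 1 else 0 :: nat) = 0 then 1 else if ?ex then 1 else 0)"
    by (intro evalr_recf_ifz evalr_recf_ball_upto evalr_recf_const evalr_recf_bex_upto assms)
  moreover have "(if (if ?all then 1 else 0 :: nat) = 0 then 1 else if ?ex then 1 else 0)
      = (if ?all \<longrightarrow> ?ex then 1 else 0 :: nat)"
    by simp
  ultimately have "evalr (recf_ifz (recf_ball_upto rS) (recf_const 1) (recf_bex_upto rR)) [c, t]
      (if ?all \<longrightarrow> ?ex then 1 else 0)" by (simp only:)
  then show ?thesis unfolding recf_climb_guard_def by (intro evalr_recf_assert) simp_all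
qed

definition recf_climb :: "recf \<Rightarrow> recf \<Rightarrow> recf \<Rightarrow> recf \<Rightarrow> recf" where
  "recf_climb rG rR rS h =
     Comp (recf_ifz (Proj 1) (Comp (recf_iterate h) [Comp Succ [Proj 2], Proj 0]) (Proj 0))
       [Comp rG [Proj 0], recf_ball_upto rS, Proj 1, recf_climb_guard rR rS]"

lemma evalr_recf_climbI:
  assumes "evalr rG [c] y" and "climb R S (\<lambda>j. (up ^^ j) y) t = Some z"
    and rR: "\<And>t. evalr rR [c, t] (if R t then 1 else 0)"
    and rS: "\<And>t. evalr rS [c, t] (if S t then 1 else 0)"
    and h: "\<And>m. evalr h [m] (up m)"
  shows "evalr (recf_climb rG rR rS h) [c, t] z"
proof -
  let ?all = "\<forall>t'\<le>t. S t'"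
  let ?b = "if ?all then 1 else 0 :: nat"
  from assms(2) have guard: "(\<forall>t'\<le>t. S t') \<longrightarrow> (\<exists>t'\<le>t. R t')"
    and z: "z = (if ?b = 0 then (up ^^ Suc t) y else y)"
    unfolding climb_def by (auto split: if_splits)
  have iterate: "evalr (Comp (recf_iterate h) [Comp Succ [Proj 2], Proj 0]) [y, ?b, t, 0]
      ((up ^^ Suc t) y)"
    by (rule evalr_CompI[OF evalr_recf_iterate[OF h]]) (auto intro!: evalr_Comp_Succ evalr_ProjI)
  have "evalr (Proj 1) [y, ?b, t, 0] ?b" and "evalr (Proj 0) [y, ?b, t, 0] y"
    by (auto intro: evalr_ProjI)
  from evalr_recf_ifz[OF this(1) iterate this(2)]
  have step: "evalr (recf_ifz (Proj 1) (Comp (recf_iterate h) [Comp Succ [Proj 2], Proj 0]) (Proj 0))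
      [y, ?b, t, 0] z"
    unfolding z .
  have "evalr (Comp rG [Proj 0]) [c, t] y" by (rule evalr_CompI[OF assms(1)]) (auto intro: evalr_ProjI)
  moreover have "evalr (recf_ball_upto rS) [c, t] ?b" by (rule evalr_recf_ball_upto[OF rS])
  moreover have "evalr (recf_climb_guard rR rS) [c, t] 0"
    using evalr_recf_climb_guard[OF rR rS] guard by blast
  moreover have "evalr (Proj 1) [c, t] t" by (auto intro: evalr_ProjI)
  ultimately have "list_all2 (\<lambda>g v. evalr g [c, t] v)
      [Comp rG [Proj 0], recf_ball_upto rS, Proj 1, recf_climb_guard rR rS] [y, ?b, t, 0]"
    unfolding list_all2_Cons list_all2_Nil by blast
  then show ?thesis unfolding recf_climb_def by (rule evalr_CompI[OF step])
qed

lemma evalr_recf_climb: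
  assumes rG: "\<And>y. evalr rG [c] y \<longleftrightarrow> Gc = Some y"
    and rR: "\<And>t. evalr rR [c, t] (if R t then 1 else 0)"
    and rS: "\<And>t. evalr rS [c, t] (if S t then 1 else 0)"
    and h: "\<And>m. evalr h [m] (up m)"
  shows "evalr (recf_climb rG rR rS h) [c, t] z \<longleftrightarrow>
    (\<exists>y. Gc = Some y \<and> climb R S (\<lambda>j. (up ^^ j) y) t = Some z)"
proof
  assume climbs: "evalr (recf_climb rG rR rS h) [c, t] z"
  obtain y w where G: "evalr (Comp rG [Proj 0]) [c, t] y"
    and guard: "evalr (recf_climb_guard rR rS) [c, t] w"
    using evalr_Comp_inv[OF climbs[unfolded recf_climb_def]] by (auto simp: list_all2_Cons1)
  from evalr_Comp_inv[OF G] have y: "evalr rG [c] y"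
    by (auto simp: list_all2_Cons1 elim!: evalr_ProjE)
  from guard have "(\<forall>t'\<le>t. S t') \<longrightarrow> (\<exists>t'\<le>t. R t')"
    using evalr_recf_climb_guard[OF rR rS] by blast
  then have "climb R S (\<lambda>j. (up ^^ j) y) t \<noteq> None" unfolding climb_def by simp
  then obtain z' where z': "climb R S (\<lambda>j. (up ^^ j) y) t = Some z'" by blast
  with evalr_deterministic[OF climbs evalr_recf_climbI[OF y z' rR rS h]] y rG
  show "\<exists>y. Gc = Some y \<and> climb R S (\<lambda>j. (up ^^ j) y) t = Some z" by blast
qed (use evalr_recf_climbI[OF _ _ rR rS h] rG in blast)

lemma computable_strict_successor:
  assumes "comp_poset lt \<rho>" and "\<forall>d. \<exists>e. lt d e"
  obtains up r_up where "\<And>m. lt (\<rho> m) (\<rho> (up m))" and "\<And>m. evalr r_up [m] (up m)"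
proof -
  obtain rl where "bij \<rho>" and rl: "\<And>m n. evalr rl [m, n] (if lt (\<rho> m) (\<rho> n) then 1 else 0)"
    using comp_posetE[OF assms(1)] by blast
  from \<open>bij \<rho>\<close> have "surj \<rho>" by (rule bij_is_surj)
  with assms(2) have above: "\<exists>n. lt (\<rho> m) (\<rho> n)" for m by (metis surjD)
  define up where "up m = (LEAST n. lt (\<rho> m) (\<rho> n))" for m
  have swapped: "evalr (Comp rl [Proj 1, Proj 0]) [n, m] (if lt (\<rho> m) (\<rho> n) then 1 else 0)" for m n
    by (rule evalr_swap_args[OF rl])
  have "evalr (recf_find (Comp rl [Proj 1, Proj 0])) [m] (up m)" for m
    unfolding up_def evalr_recf_find_iff[OF swapped] using above by blast
  moreover have "lt (\<rho> m) (\<rho> (up m))" for m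
    unfolding up_def using above by (rule LeastI_ex)
  ultimately show thesis using that by blast
qed

lemma pcomp2_on_climb:
  assumes "bij \<rho>" and G: "pcomp_on X \<rho> G" and "comprel2_on X R" "comprel2_on X S"
    and r_up: "\<And>m. evalr r_up [m] (up m)"
  shows "pcomp2_on X \<rho> (\<lambda>x. case G x of None \<Rightarrow> (\<lambda>_. None)
    | Some d \<Rightarrow> climb (R x) (S x) (\<lambda>j. \<rho> ((up ^^ j) (inv \<rho> d))))"
proof -
  obtain rR rS where rR: "\<forall>x\<in>space X. \<forall>t. evalr rR [code x, t] (if R x t then 1 else 0)"
    and rS: "\<forall>x\<in>space X. \<forall>t. evalr rS [code x, t] (if S x t then 1 else 0)"
    using assms(3,4) unfolding comprel2_on_def by blast
  from G obtain rG where rG: "\<forall>x\<in>space X. \<forall>y. evalr rG [code x] y \<longleftrightarrow> G x = Some (\<rho> y)"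
    unfolding pcomp_on_def by blast
  have \<rho>_inv: "\<rho> (inv \<rho> d) = d" for d using assms(1) by (simp add: bij_is_surj surj_f_inv_f)
  show ?thesis
    unfolding pcomp2_on_def
  proof (intro exI ballI allI)
    fix x t z assume x: "x \<in> space X"
    have "G x = Some (\<rho> y) \<longleftrightarrow> map_option (inv \<rho>) (G x) = Some y" for y
      using \<rho>_inv inv_f_f[OF bij_is_inj[OF assms(1)]] by (cases "G x") auto
    with rG x have "evalr rG [code x] y \<longleftrightarrow> map_option (inv \<rho>) (G x) = Some y" for y by blast
    from evalr_recf_climb[OF this rR[rule_format, OF x] rS[rule_format, OF x] r_up]
    show "evalr (recf_climb rG rR rS r_up) [code x, t] z \<longleftrightarrow>
        (case G x of None \<Rightarrow> (\<lambda>_. None)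
         | Some d \<Rightarrow> climb (R x) (S x) (\<lambda>j. \<rho> ((up ^^ j) (inv \<rho> d)))) t = Some (\<rho> z)"
      using bij_is_inj[OF assms(1)] by (cases "G x") (auto simp: climb_comp[where \<phi> = \<rho>] inj_eq)
  qed
qed

theorem RestrPC_subset_MaxPR:
  assumes "comp_poset lt \<rho>" and "\<forall>d. \<exists>e. lt d e"
  shows "RestrPC X \<rho> \<subseteq> MaxPR X lt \<rho>"
proof
  fix F assume "F \<in> RestrPC X \<rho>"
  then obtain G Z R S where G: "pcomp_on X \<rho> G" and "comprel2_on X R" "comprel2_on X S"
    and F: "\<forall>x\<in>space X. F x = (if x \<in> Z then G x else None)"
    and Z: "\<forall>x\<in>space X. x \<in> Z \<longleftrightarrow> (\<exists>t. R x t) \<and> (\<forall>t. S x t)"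
    unfolding RestrPC_def sigma1_pi1_def by blast
  obtain rl where "bij \<rho>" and order: "irreflp lt" "transp lt"
    using comp_posetE[OF assms(1)] by blast
  obtain up r_up where up: "\<And>m. lt (\<rho> m) (\<rho> (up m))" and r_up: "\<And>m. evalr r_up [m] (up m)"
    using computable_strict_successor[OF assms] by blast
  define f where "f x = (case G x of None \<Rightarrow> (\<lambda>_. None)
    | Some d \<Rightarrow> climb (R x) (S x) (\<lambda>j. \<rho> ((up ^^ j) (inv \<rho> d))))" for x
  have mono: "monotone (<) lt (\<lambda>j. \<rho> ((up ^^ j) y))" for y
    by (rule monotone_iterates[where \<rho> = \<rho> and h = up, OF order(2) up])
  have "pcomp2_on X \<rho> f"
    unfolding f_def by (rule pcomp2_on_climb) fact+
  moreover have "incr_on X lt f"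
    unfolding incr_on_iff_ascending f_def
    using ascending_climb[OF mono] by (auto simp: ascending_def split: option.splits)
  moreover have "F x = maxD lt f x" if "x \<in> space X" for x
  proof (cases "G x")
    case None
    then show ?thesis using F that by (simp add: f_def maxD_eq_NoneI)
  next
    case (Some d)
    then have "f x = climb (R x) (S x) (\<lambda>j. \<rho> ((up ^^ j) (inv \<rho> d)))" by (simp add: f_def)
    from maxD_climb[where f = f and x = x, OF order mono this] show ?thesis
      using F Z that Some \<open>bij \<rho>\<close> by (auto simp: bij_is_surj surj_f_inv_f)
  qed
  ultimately show "F \<in> MaxPR X lt \<rho>" unfolding MaxPR_def by blast
qed

lemma RestrPC_total_pcomp_on:
  assumes "F \<in> RestrPC X \<rho>" and "\<forall>x\<in>space X. F x \<noteq> None"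
  shows "pcomp_on X \<rho> F"
proof -
  from assms(1) obtain G Z where "pcomp_on X \<rho> G" "\<forall>x\<in>space X. F x = (if x \<in> Z then G x else None)"
    unfolding RestrPC_def by blast
  with assms(2) show ?thesis unfolding pcomp_on_def by (metis (no_types, lifting))
qed

theorem mainTheorem9:
  fixes X :: "bcomp list" and lt :: "'d \<Rightarrow> 'd \<Rightarrow> bool" and \<rho> :: "nat \<Rightarrow> 'd"
  assumes "basic_space X" and "comp_poset lt \<rho>"
  shows "(MaxPR X lt \<rho> \<inter> MinPR X lt \<rho> \<subseteq> RestrPC X \<rho>)
    \<and> (\<forall>F \<in> MaxPR X lt \<rho> \<inter> MinPR X lt \<rho>.
          (\<forall>x\<in>space X. F x \<noteq> None) \<longrightarrow> pcomp_on X \<rho> F)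
    \<and> ((\<forall>d. \<exists>e. lt d e) \<longrightarrow> RestrPC X \<rho> \<subseteq> MaxPR X lt \<rho>)
    \<and> ((\<forall>d. \<exists>e. lt e d) \<longrightarrow> RestrPC X \<rho> \<subseteq> MinPR X lt \<rho>)
    \<and> ((\<forall>d. \<exists>e. lt d e) \<and> (\<forall>d. \<exists>e. lt e d) \<longrightarrow>
          MaxPR X lt \<rho> \<inter> MinPR X lt \<rho> = RestrPC X \<rho>)"
proof -
  have both: "MaxPR X lt \<rho> \<inter> MinPR X lt \<rho> \<subseteq> RestrPC X \<rho>"
    using MaxPR_Int_MinPR_subset_RestrPC[OF assms(2)] .
  have max: "(\<forall>d. \<exists>e. lt d e) \<longrightarrow> RestrPC X \<rho> \<subseteq> MaxPR X lt \<rho>"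
    using RestrPC_subset_MaxPR[OF assms(2)] by blast
  have min: "(\<forall>d. \<exists>e. lt e d) \<longrightarrow> RestrPC X \<rho> \<subseteq> MinPR X lt \<rho>"
    using RestrPC_subset_MaxPR[OF comp_poset_conversep[OF assms(2)]]
    unfolding MinPR_eq_MaxPR_conversep by simp
  show ?thesis using both max min RestrPC_total_pcomp_on by blast
qed

end
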